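(* Under the standing assumptions below, let $(\hat\nu,(\hat v^i)_{i\in\mathbb N})$ be the mean-field game Nash equilibrium of the infinite-player game, $\hat v^{-i}=(\hat v^1,\dots,\hat v^{i-1},\hat v^{i+1},\dots,\hat v^N)$, and let $\mathcal U_b\subset\mathcal U$ be any subclass containing all $\hat v^i$, $i\in\mathbb N$, with $\sup_{u\in\mathcal U_b}\|u\|_{2,T}^2<\infty$. Then there is a constant $C>0$ independent of $N$ and $i$ such that for all $N\ge2$ and $1\le i\le N$, $$J^{i,N}(\hat v^i;\hat v^{-i})\le\sup_{u\in\mathcal U_b}J^{i,N}(u;\hat v^{-i})\le J^{i,N}(\hat v^i;\hat v^{-i})+C\big(h(N)^{1/2}\vee N^{-1}\big).$$
   Context: Fix $T>0$ and a filtered probability space $(\Omega,\mathcal F,\mathbb F=(\mathcal F_t)_{0\le t\le T},\mathbb P)$ satisfying the usual conditions. On $L^2([0,T],\mathbb R)$, $\langle f,g\rangle_{L^2}=\int_0^Tf(s)g(s)\,ds$. A kernel $G\in L^2([0,T]^2,\mathbb R)$ induces the integral operator $(\boldsymbol Gf)(s)=\int_0^TG(s,u)f(u)\,du$; $\boldsymbol G^*$ is the adjoint operator; $\mathrm{id}$ is the identity. A measurable kernel $G$ is Volterra if $G(t,s)=0$ whenever $s\ge t$; it is nonnegative definite if $\int_0^T\int_0^T(G(t,s)+G(s,t))f(s)f(t)\,ds\,dt\ge0$ for all $f\in L^2([0,T],\mathbb R)$. The class $\mathcal G$ consists of the nonnegative definite Volterra kernels $G:[0,T]^2\to\mathbb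 R_+$ with $\sup_{t\le T}\int_0^T|G(t,s)|^2ds+\sup_{s\le T}\int_0^T|G(t,s)|^2dt<\infty$; an admissible Volterra operator is one induced by a kernel in $\mathcal G$. $\mathcal U$ is the set of $\mathbb F$-progressively measurable real processes $u$ with $\|u\|_{2,T}:=(\int_0^T\mathbb E[u_t^2]dt)^{1/2}<\infty$. $\boldsymbol A_1,\boldsymbol A_3$ are admissible Volterra operators; $\boldsymbol A_2=\lambda\,\mathrm{id}+\hat{\boldsymbol A}_2$ with $\lambda>0$ and $\hat{\boldsymbol A}_2$ admissible Volterra. $b^0,b^1,b^2,\dots$ are $\mathbb F$-progressively measurable processes with $\int_0^T\mathbb E[(b^i_s)^2]ds<\infty$, $c^1,c^2,\dots$ integrable random variables, and there are an $\mathbb F$-progressively measurable $b^\infty\in L^2(\Omega\times[0,T])$ and a bounded $h:\mathbb R_+\to\mathbb R_+$ with $h(x)\to0$ as $x\to\infty$ such that $\sup_{t\le T}\mathbb E[(\frac1N\sum_{i=1}^Nb^i_t-b^\infty_t)^2]\le h(N)$ for all $N\ge1$. $N$-player objective: for $u^1,\dots,u^N\in\mathcal U$, $\bar u=\frac1N\sum_ju^j$, $J^{i,N}(u^i;u^{-i})=\mathbb E[-\langle\bar u,\boldsymbol A_1\bar u\rangle_{L^2}-\langle u^i,\boldsymbol A_2u^i\rangle_{L^2}-\langle u^i,(\boldsymbol A_3+\boldsymbol A_3^* )\bar u\rangle_{L^2}+\langle b^i,u^i\rangle_{L^2}+\langle b^0,\bar u\rangle_{L^2}+c^i]$. Infinite-player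 game: $J^{i,\infty}(v^i;\nu)=\mathbb E[-\langle\nu,\boldsymbol A_1\nu\rangle_{L^2}-\langle v^i,\boldsymbol A_2v^i\rangle_{L^2}-\langle v^i,(\boldsymbol A_3+\boldsymbol A_3^* )\nu\rangle_{L^2}+\langle b^i,v^i\rangle_{L^2}+\langle b^0,\nu\rangle_{L^2}+c^i]$; a mean-field game Nash equilibrium is $(\hat\nu,(\hat v^i)_{i\in\mathbb N})\subset\mathcal U$ such that each $\hat v^i$ maximizes $v\mapsto J^{i,\infty}(v;\hat\nu)$ over $\mathcal U$ and $\lim_{N\to\infty}\sup_{t\le T}\mathbb E[(\frac1N\sum_{i=1}^N\hat v^i_t-\hat\nu_t)^2]=0$. *)

theory Defs
  imports "HOL-Probability.Probability"
begin

text \<open>Time horizon [0,T]; processes are functions u :: real => 'a => real (time, outcome).\<close>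

definition usual_filtration :: "'a measure \<Rightarrow> real \<Rightarrow> (real \<Rightarrow> 'a measure) \<Rightarrow> bool" where
  "usual_filtration M T F \<longleftrightarrow>
     (\<forall>t\<in>{0..T}. space (F t) = space M \<and> sets (F t) \<subseteq> sets M) \<and>
     (\<forall>s\<in>{0..T}. \<forall>t\<in>{0..T}. s \<le> t \<longrightarrow> sets (F s) \<subseteq> sets (F t)) \<and>
     (\<forall>t\<in>{0..<T}. sets (F t) = (\<Inter>s\<in>{t<..T}. sets (F s))) \<and>
     (\<forall>A. A \<subseteq> space M \<and> (\<exists>B\<in>sets M. A \<subseteq> B \<and> emeasure M B = 0) \<longrightarrow> A \<in> sets (F 0))"

definition prog_meas :: "real \<Rightarrow> (real \<Rightarrow> 'a measure) \<Rightarrow> (real \<Rightarrow> 'a \<Rightarrow> real) \<Rightarrow> bool" where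
  "prog_meas T F u \<longleftrightarrow>
     (\<forall>t\<in>{0..T}. (\<lambda>(s,\<omega>). u s \<omega>) \<in> borel_measurable (restrict_space borel {0..t} \<Otimes>\<^sub>M F t))"

definition sqnorm2T :: "'a measure \<Rightarrow> real \<Rightarrow> (real \<Rightarrow> 'a \<Rightarrow> real) \<Rightarrow> ennreal" where
  "sqnorm2T M T u = (\<integral>\<^sup>+ t\<in>{0..T}. (\<integral>\<^sup>+ \<omega>. ennreal ((u t \<omega>)\<^sup>2) \<partial>M) \<partial>lborel)"

definition admissible_controls :: "'a measure \<Rightarrow> real \<Rightarrow> (real \<Rightarrow> 'a measure) \<Rightarrow> (real \<Rightarrow> 'a \<Rightarrow> real) set" where
  "admissible_controls M T F = {u. prog_meas T F u \<and> sqnorm2T M T u < \<infinity>}"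

definition l2inner :: "real \<Rightarrow> (real \<Rightarrow> real) \<Rightarrow> (real \<Rightarrow> real) \<Rightarrow> real" where
  "l2inner T f g = (LINT s:{0..T}|lborel. f s * g s)"

definition kop :: "real \<Rightarrow> (real \<Rightarrow> real \<Rightarrow> real) \<Rightarrow> (real \<Rightarrow> real) \<Rightarrow> (real \<Rightarrow> real)" where
  "kop T G f = (\<lambda>s. LINT u:{0..T}|lborel. G s u * f u)"

definition adj_kernel :: "(real \<Rightarrow> real \<Rightarrow> real) \<Rightarrow> (real \<Rightarrow> real \<Rightarrow> real)" where
  "adj_kernel G = (\<lambda>s u. G u s)"

definition L2_fun :: "real \<Rightarrow> (real \<Rightarrow> real) \<Rightarrow> bool" where
  "L2_fun T f \<longleftrightarrow> f \<in> borel_measurable lborel \<and> set_integrable lborel {0..T} (\<lambda>s. (f s)\<^sup>2)"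

definition volterra :: "real \<Rightarrow> (real \<Rightarrow> real \<Rightarrow> real) \<Rightarrow> bool" where
  "volterra T G \<longleftrightarrow> (\<forall>t\<in>{0..T}. \<forall>s\<in>{0..T}. t \<le> s \<longrightarrow> G t s = 0)"

definition nonneg_definite :: "real \<Rightarrow> (real \<Rightarrow> real \<Rightarrow> real) \<Rightarrow> bool" where
  "nonneg_definite T G \<longleftrightarrow> (\<forall>f. L2_fun T f \<longrightarrow>
     0 \<le> (LINT t:{0..T}|lborel. (LINT s:{0..T}|lborel. (G t s + G s t) * f s * f t)))"

definition admissible_kernel :: "real \<Rightarrow> (real \<Rightarrow> real \<Rightarrow> real) \<Rightarrow> bool" where
  "admissible_kernel T G \<longleftrightarrow>
     (\<lambda>(t,s). G t s) \<in> borel_measurable borel \<and>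
     (\<integral>\<^sup>+ p\<in>{0..T}\<times>{0..T}. ennreal ((G (fst p) (snd p))\<^sup>2) \<partial>lborel) < \<infinity> \<and>
     volterra T G \<and> nonneg_definite T G \<and>
     (\<forall>t\<in>{0..T}. \<forall>s\<in>{0..T}. 0 \<le> G t s) \<and>
     (\<exists>K. \<forall>t\<in>{0..T}. (\<integral>\<^sup>+ s\<in>{0..T}. ennreal ((G t s)\<^sup>2) \<partial>lborel) \<le> ennreal K) \<and>
     (\<exists>K. \<forall>s\<in>{0..T}. (\<integral>\<^sup>+ t\<in>{0..T}. ennreal ((G t s)\<^sup>2) \<partial>lborel) \<le> ennreal K)"

text \<open>Generic objective: player control u, aggregate (mean) control m, own signal bi,
  common signal b0, constant ci; A2 = lam id + A2h.\<close>
definition Jobj :: "'a measure \<Rightarrow> real \<Rightarrow> (real \<Rightarrow> real \<Rightarrow> real) \<Rightarrow> real \<Rightarrow> (real \<Rightarrow> real \<Rightarrow> real)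
   \<Rightarrow> (real \<Rightarrow> real \<Rightarrow> real) \<Rightarrow> (real \<Rightarrow> 'a \<Rightarrow> real) \<Rightarrow> (real \<Rightarrow> 'a \<Rightarrow> real) \<Rightarrow> ('a \<Rightarrow> real)
   \<Rightarrow> (real \<Rightarrow> 'a \<Rightarrow> real) \<Rightarrow> (real \<Rightarrow> 'a \<Rightarrow> real) \<Rightarrow> real" where
  "Jobj M T A1 lam A2h A3 b0 bi ci u m = (\<integral>\<omega>.
      (let uw = (\<lambda>t. u t \<omega>); mw = (\<lambda>t. m t \<omega>) in
        - l2inner T mw (kop T A1 mw)
        - (lam * l2inner T uw uw + l2inner T uw (kop T A2h uw))
        - l2inner T uw (\<lambda>t. kop T A3 mw t + kop T (adj_kernel A3) mw t)
        + l2inner T (\<lambda>t. bi t \<omega>) uw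
        + l2inner T (\<lambda>t. b0 t \<omega>) mw
        + ci \<omega>) \<partial>M)"

definition JN :: "'a measure \<Rightarrow> real \<Rightarrow> (real \<Rightarrow> real \<Rightarrow> real) \<Rightarrow> real \<Rightarrow> (real \<Rightarrow> real \<Rightarrow> real)
   \<Rightarrow> (real \<Rightarrow> real \<Rightarrow> real) \<Rightarrow> (nat \<Rightarrow> real \<Rightarrow> 'a \<Rightarrow> real) \<Rightarrow> (nat \<Rightarrow> 'a \<Rightarrow> real)
   \<Rightarrow> nat \<Rightarrow> nat \<Rightarrow> (real \<Rightarrow> 'a \<Rightarrow> real) \<Rightarrow> (nat \<Rightarrow> real \<Rightarrow> 'a \<Rightarrow> real) \<Rightarrow> real" where
  "JN M T A1 lam A2h A3 b c N i u v =
     Jobj M T A1 lam A2h A3 (b 0) (b i) (c i) u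
       (\<lambda>t \<omega>. (u t \<omega> + (\<Sum>j\<in>{1..N}-{i}. v j t \<omega>)) / real N)"

definition Jinf :: "'a measure \<Rightarrow> real \<Rightarrow> (real \<Rightarrow> real \<Rightarrow> real) \<Rightarrow> real \<Rightarrow> (real \<Rightarrow> real \<Rightarrow> real)
   \<Rightarrow> (real \<Rightarrow> real \<Rightarrow> real) \<Rightarrow> (nat \<Rightarrow> real \<Rightarrow> 'a \<Rightarrow> real) \<Rightarrow> (nat \<Rightarrow> 'a \<Rightarrow> real)
   \<Rightarrow> nat \<Rightarrow> (real \<Rightarrow> 'a \<Rightarrow> real) \<Rightarrow> (real \<Rightarrow> 'a \<Rightarrow> real) \<Rightarrow> real" where
  "Jinf M T A1 lam A2h A3 b c i v nu = Jobj M T A1 lam A2h A3 (b 0) (b i) (c i) v nu"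

definition mfg_nash :: "'a measure \<Rightarrow> real \<Rightarrow> (real \<Rightarrow> 'a measure) \<Rightarrow> (real \<Rightarrow> real \<Rightarrow> real) \<Rightarrow> real
   \<Rightarrow> (real \<Rightarrow> real \<Rightarrow> real) \<Rightarrow> (real \<Rightarrow> real \<Rightarrow> real) \<Rightarrow> (nat \<Rightarrow> real \<Rightarrow> 'a \<Rightarrow> real)
   \<Rightarrow> (nat \<Rightarrow> 'a \<Rightarrow> real) \<Rightarrow> (real \<Rightarrow> 'a \<Rightarrow> real) \<Rightarrow> (nat \<Rightarrow> real \<Rightarrow> 'a \<Rightarrow> real) \<Rightarrow> bool" where
  "mfg_nash M T F A1 lam A2h A3 b c nu v \<longleftrightarrow>
     nu \<in> admissible_controls M T F \<and>
     (\<forall>i\<ge>1. v i \<in> admissible_controls M T F) \<and>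
     (\<forall>i\<ge>1. \<forall>w\<in>admissible_controls M T F.
        Jinf M T A1 lam A2h A3 b c i w nu \<le> Jinf M T A1 lam A2h A3 b c i (v i) nu) \<and>
     ((\<lambda>N. SUP t\<in>{0..T}. \<integral>\<^sup>+ \<omega>. ennreal (((\<Sum>j\<in>{1..N}. v j t \<omega>) / real N - nu t \<omega>)\<^sup>2) \<partial>M)
        \<longlonglongrightarrow> 0)"

end

theory Submission
  imports Defs
begin

text \<open>The objectives are quadratic functionals of the controls, built from the expected
  \<open>L\<^sup>2\<close> inner product and the expected forms \<open>E \<langle>x, G y\<rangle>\<close> of the kernels. Perturbing the
  equilibrium control of a player in an admissible direction gives a first order condition;
  averaging it over the first \<open>N\<close> players and letting \<open>N \<rightarrow> \<infinity>\<close> gives the first order condition of the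
  limit \<open>(\<nu>, b\<^sup>\<infinity>)\<close>. Tested against the deviation \<open>d\<^sub>N\<close> of the empirical mean of the equilibrium
  controls from \<open>\<nu>\<close>, and using that \<open>A\<^sub>2\<close> is nonnegative, the difference of the two conditions yields
  \<open>2\<lambda> \<parallel>d\<^sub>N\<parallel> \<le> \<parallel>b\<^sup>N - b\<^sup>\<infinity>\<parallel> \<le> \<surd>(T h(N))\<close>, where \<open>b\<^sup>N\<close> is the empirical mean of the signals. If
  player \<open>i\<close> deviates to \<open>u\<close>, the empirical mean moves by \<open>(u - v\<^sup>i)/N\<close>, and the gain in the
  \<open>N\<close>-player game is the gain in the mean-field game, which is nonpositive, plus cross terms of
  order \<open>1/N\<close> and \<open>\<parallel>d\<^sub>N\<parallel>\<close>.\<close>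

lemma abs_mult_le_amgm:
  fixes x y c :: real
  assumes "c > 0"
  shows "\<bar>x * y\<bar> \<le> (c * x\<^sup>2 + y\<^sup>2 / c) / 2"
proof -
  have "0 \<le> (c * \<bar>x\<bar> - \<bar>y\<bar>)\<^sup>2" by simp
  hence "2 * c * \<bar>x * y\<bar> \<le> c\<^sup>2 * x\<^sup>2 + y\<^sup>2"
    by (simp add: power2_eq_square algebra_simps abs_mult)
  with assms show ?thesis
    by (simp add: field_simps power2_eq_square)
qed

text \<open>Optimising the weight \<open>c\<close> in the bound above turns it into a Cauchy--Schwarz bound.\<close>

lemma le_sqrt_mult_if_amgm_bound:
  fixes p q z :: real
  assumes "p \<ge> 0" "q \<ge> 0" and bound: "\<And>c. c > 0 \<Longrightarrow> z \<le> (c * p + q / c) / 2"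
  shows "z \<le> sqrt (p * q)"
proof (cases "p > 0 \<and> q > 0")
  case True
  define c where "c = sqrt q / sqrt p"
  have "c > 0" using True by (simp add: c_def)
  moreover have "c * p = sqrt p * sqrt q" "q / c = sqrt p * sqrt q"
    using True by (simp_all add: c_def field_simps)
  ultimately show ?thesis using bound[of c] by (simp add: real_sqrt_mult)
next
  case False
  then consider "p = 0" | "q = 0" using assms(1,2) by linarith
  thus ?thesis
  proof cases
    case 1
    show ?thesis
    proof (rule ccontr)
      assume "\<not> ?thesis"
      hence z: "z > 0" using 1 by simp
      have "z \<le> q / (q / z + 1) / 2" using bound[of "q / z + 1"] 1 z assms(2)
        by (simp add: add_nonneg_pos)
      also have "\<dots> < z" using z assms(2) by (simp add: field_simps add_nonneg_pos)
      finally show False by simp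
    qed
  next
    case 2
    show ?thesis
    proof (rule ccontr)
      assume "\<not> ?thesis"
      hence z: "z > 0" using 2 by simp
      have "z \<le> (z / (p + 1)) * p / 2" using bound[of "z / (p + 1)"] 2 z assms(1) by simp
      also have "\<dots> < z" using z assms(1) by (simp add: field_simps add_nonneg_pos)
      finally show False by simp
    qed
  qed
qed

lemma power2_lincomb_le: "((a::real) * x + b * y)\<^sup>2 \<le> 2 * a\<^sup>2 * x\<^sup>2 + 2 * b\<^sup>2 * y\<^sup>2"
proof -
  have "0 \<le> (a * x - b * y)\<^sup>2" by simp
  thus ?thesis by (simp add: power2_eq_square algebra_simps)
qed

lemma linear_coeff_eq_0_if_quadratic_nonpos:
  fixes L Q :: real
  assumes "\<And>e. e * L + e\<^sup>2 * Q \<le> 0"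
  shows "L = 0"
proof (rule ccontr)
  assume L: "L \<noteq> 0"
  define q where "q = \<bar>Q\<bar> + 1"
  define e where "e = L / q"
  have q: "q > 0" by (simp add: q_def)
  have "e * L + e\<^sup>2 * Q \<ge> e * L - e\<^sup>2 * \<bar>Q\<bar>"
    by (smt (verit) abs_ge_minus_self mult_left_mono zero_le_power2 mult_minus_right)
  also have "e * L - e\<^sup>2 * \<bar>Q\<bar> = L\<^sup>2 * (q - \<bar>Q\<bar>) / q\<^sup>2"
    using q by (simp add: e_def field_simps power2_eq_square)
  also have "\<dots> = L\<^sup>2 / q\<^sup>2" by (simp add: q_def)
  finally have "0 < e * L + e\<^sup>2 * Q" using L q by (smt (verit) divide_pos_pos zero_less_power2)
  thus False using assms[of e] by simp
qed

lemma abs_integral_le_AE: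
  fixes f g :: "'b \<Rightarrow> real"
  assumes "integrable N f" "integrable N g" "AE x in N. \<bar>f x\<bar> \<le> g x"
  shows "\<bar>\<integral>x. f x \<partial>N\<bar> \<le> (\<integral>x. g x \<partial>N)"
proof -
  have "(\<integral>x. f x \<partial>N) \<le> (\<integral>x. g x \<partial>N)"
    by (rule integral_mono_AE[OF assms(1,2)]) (use assms(3) in \<open>auto elim: AE_mp\<close>)
  moreover have "(\<integral>x. - f x \<partial>N) \<le> (\<integral>x. g x \<partial>N)"
    by (rule integral_mono_AE) (use assms in \<open>auto elim: AE_mp\<close>)
  ultimately show ?thesis by simp
qed

section \<open>Square-integrable functions on \<open>[0,T]\<close>\<close>

definition zero_outside :: "real \<Rightarrow> (real \<Rightarrow> real) \<Rightarrow> real \<Rightarrow> real" where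
  "zero_outside T f = (\<lambda>s. indicator {0..T} s * f s)"

text \<open>Unlike \<open>L2_fun\<close>, only the restriction to \<open>[0,T]\<close> needs to be measurable:
  the paths of progressively measurable controls are not controlled outside the horizon.\<close>

definition L2_on :: "real \<Rightarrow> (real \<Rightarrow> real) \<Rightarrow> bool" where
  "L2_on T f \<longleftrightarrow> zero_outside T f \<in> borel_measurable borel \<and>
     integrable lborel (\<lambda>s. (zero_outside T f s)\<^sup>2)"

lemma l2inner_eq_integral: "l2inner T f g = (\<integral>s. zero_outside T f s * zero_outside T g s \<partial>lborel)"
  unfolding l2inner_def set_lebesgue_integral_def zero_outside_def
  by (rule Bochner_Integration.integral_cong) (auto split: split_indicator)

lemma l2inner_eq_integral': "l2inner T f g = (\<integral>s. zero_outside T f s * g s \<partial>lborel)"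
  unfolding l2inner_eq_integral zero_outside_def
  by (rule Bochner_Integration.integral_cong) (auto split: split_indicator)

lemma l2inner_self_eq_integral: "l2inner T f f = (\<integral>s. (zero_outside T f s)\<^sup>2 \<partial>lborel)"
  unfolding l2inner_eq_integral by (simp add: power2_eq_square)

lemma l2inner_self_nonneg: "0 \<le> l2inner T f f"
  unfolding l2inner_self_eq_integral by simp

lemma l2inner_commute: "l2inner T f g = l2inner T g f"
  unfolding l2inner_def by (simp add: mult.commute)

lemma l2inner_cong:
  "(\<And>s. s \<in> {0..T} \<Longrightarrow> f s = f' s) \<Longrightarrow> (\<And>s. s \<in> {0..T} \<Longrightarrow> g s = g' s) \<Longrightarrow>
   l2inner T f g = l2inner T f' g'"
  unfolding l2inner_def by (rule set_lebesgue_integral_cong) auto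

lemma zero_outside_lincomb:
  "zero_outside T (\<lambda>s. a * f s + b * g s) = (\<lambda>s. a * zero_outside T f s + b * zero_outside T g s)"
  by (auto simp: zero_outside_def algebra_simps)

lemma L2_on_measurable: "L2_on T f \<Longrightarrow> zero_outside T f \<in> borel_measurable lborel"
  unfolding L2_on_def by (simp add: measurable_lborel1)

lemma L2_on_integrable_mult:
  assumes "L2_on T f" "L2_on T g"
  shows "integrable lborel (\<lambda>s. zero_outside T f s * zero_outside T g s)"
proof (rule Bochner_Integration.integrable_bound)
  show "integrable lborel (\<lambda>s. (zero_outside T f s)\<^sup>2 + (zero_outside T g s)\<^sup>2)"
    using assms unfolding L2_on_def by auto
  show "(\<lambda>s. zero_outside T f s * zero_outside T g s) \<in> borel_measurable lborel"
    using L2_on_measurable[OF assms(1)] L2_on_measurable[OF assms(2)] by measurable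
  show "AE x in lborel. norm (zero_outside T f x * zero_outside T g x)
          \<le> norm ((zero_outside T f x)\<^sup>2 + (zero_outside T g x)\<^sup>2)"
  proof (rule AE_I2)
    fix x
    show "norm (zero_outside T f x * zero_outside T g x)
          \<le> norm ((zero_outside T f x)\<^sup>2 + (zero_outside T g x)\<^sup>2)"
      using abs_mult_le_amgm[of 1 "zero_outside T f x" "zero_outside T g x"]
      by (simp add: add_nonneg_nonneg)
  qed
qed

lemma L2_on_lincomb:
  assumes "L2_on T f" "L2_on T g"
  shows "L2_on T (\<lambda>s. a * f s + b * g s)"
  unfolding L2_on_def zero_outside_lincomb
proof
  have [measurable]: "zero_outside T f \<in> borel_measurable borel" "zero_outside T g \<in> borel_measurable borel"
    using assms by (simp_all add: L2_on_def)
  show m: "(\<lambda>s. a * zero_outside T f s + b * zero_outside T g s) \<in> borel_measurable borel"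
    by measurable
  show "integrable lborel (\<lambda>s. (a * zero_outside T f s + b * zero_outside T g s)\<^sup>2)"
  proof (rule Bochner_Integration.integrable_bound)
    show "integrable lborel
        (\<lambda>s. 2 * a\<^sup>2 * (zero_outside T f s)\<^sup>2 + 2 * b\<^sup>2 * (zero_outside T g s)\<^sup>2)"
      using assms unfolding L2_on_def by auto
    show "(\<lambda>s. (a * zero_outside T f s + b * zero_outside T g s)\<^sup>2) \<in> borel_measurable lborel"
      using m by (simp add: measurable_lborel1)
    show "AE x in lborel. norm ((a * zero_outside T f x + b * zero_outside T g x)\<^sup>2)
        \<le> norm (2 * a\<^sup>2 * (zero_outside T f x)\<^sup>2 + 2 * b\<^sup>2 * (zero_outside T g x)\<^sup>2)"
      using power2_lincomb_le by (intro AE_I2) (simp del: power2_sum)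
  qed
qed

lemma l2inner_lincomb_left:
  assumes "L2_on T f" "L2_on T g" "L2_on T h"
  shows "l2inner T (\<lambda>s. a * f s + b * g s) h = a * l2inner T f h + b * l2inner T g h"
proof -
  have "l2inner T (\<lambda>s. a * f s + b * g s) h =
      (\<integral>s. a * (zero_outside T f s * zero_outside T h s)
          + b * (zero_outside T g s * zero_outside T h s) \<partial>lborel)"
    unfolding l2inner_eq_integral zero_outside_lincomb by (simp add: algebra_simps)
  also have "\<dots> = a * l2inner T f h + b * l2inner T g h"
    using L2_on_integrable_mult assms by (simp add: l2inner_eq_integral)
  finally show ?thesis .
qed

lemma l2inner_lincomb_right:
  assumes "L2_on T f" "L2_on T g" "L2_on T h"
  shows "l2inner T h (\<lambda>s. a * f s + b * g s) = a * l2inner T h f + b * l2inner T h g"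
  using l2inner_lincomb_left[OF assms] by (simp add: l2inner_commute)

lemma abs_l2inner_le_amgm:
  assumes "L2_on T f" "L2_on T g" "c > 0"
  shows "\<bar>l2inner T f g\<bar> \<le> (c * l2inner T f f + l2inner T g g / c) / 2"
proof -
  have "\<bar>l2inner T f g\<bar>
      \<le> (\<integral>s. (c * (zero_outside T f s)\<^sup>2 + (zero_outside T g s)\<^sup>2 / c) / 2 \<partial>lborel)"
    unfolding l2inner_eq_integral
  proof (rule integral_abs_bound_integral)
    show "integrable lborel (\<lambda>s. zero_outside T f s * zero_outside T g s)"
      by (rule L2_on_integrable_mult[OF assms(1,2)])
    show "integrable lborel (\<lambda>s. (c * (zero_outside T f s)\<^sup>2 + (zero_outside T g s)\<^sup>2 / c) / 2)"
      using assms(1,2) by (simp add: L2_on_def)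
  qed (rule abs_mult_le_amgm[OF assms(3)])
  also have "\<dots> = (c * l2inner T f f + l2inner T g g / c) / 2"
    unfolding l2inner_self_eq_integral using assms(1,2) by (simp add: L2_on_def)
  finally show ?thesis .
qed

section \<open>Integral operators\<close>

definition kernel_row_bound :: "real \<Rightarrow> (real \<Rightarrow> real \<Rightarrow> real) \<Rightarrow> real \<Rightarrow> bool" where
  "kernel_row_bound T G K \<longleftrightarrow> K \<ge> 0 \<and> (\<lambda>(t,s). G t s) \<in> borel_measurable borel \<and>
     (\<forall>t\<in>{0..T}. (\<integral>\<^sup>+ s\<in>{0..T}. ennreal ((G t s)\<^sup>2) \<partial>lborel) \<le> ennreal K)"

definition row_bound :: "real \<Rightarrow> (real \<Rightarrow> real \<Rightarrow> real) \<Rightarrow> real" where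
  "row_bound T G = (SOME K. kernel_row_bound T G K)"

lemma kernel_row_bound_measurable:
  "kernel_row_bound T G K \<Longrightarrow> (\<lambda>(t,s). G t s) \<in> borel_measurable (borel \<Otimes>\<^sub>M borel)"
  unfolding kernel_row_bound_def by (simp add: borel_prod)

lemma kernel_row_bound_measurable_lborel:
  "kernel_row_bound T G K \<Longrightarrow> (\<lambda>(t,s). G t s) \<in> borel_measurable (lborel \<Otimes>\<^sub>M lborel)"
  using kernel_row_bound_measurable
  by (simp add: measurable_cong_sets[OF sets_pair_measure_cong[OF sets_lborel sets_lborel] refl])

lemma kernel_row_bound_nonneg: "kernel_row_bound T G K \<Longrightarrow> K \<ge> 0"
  by (simp add: kernel_row_bound_def)

lemma
  assumes "kernel_row_bound T G K" "t \<in> {0..T}"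
  shows L2_on_kernel_row: "L2_on T (G t)"
    and l2inner_kernel_row_le: "l2inner T (G t) (G t) \<le> K"
proof -
  have "G t \<in> borel_measurable borel"
    using measurable_Pair2[OF kernel_row_bound_measurable[OF assms(1)], of t] by simp
  hence meas: "zero_outside T (G t) \<in> borel_measurable borel"
    unfolding zero_outside_def by measurable
  have "(\<integral>\<^sup>+ s. ennreal ((zero_outside T (G t) s)\<^sup>2) \<partial>lborel)
      = (\<integral>\<^sup>+ s\<in>{0..T}. ennreal ((G t s)\<^sup>2) \<partial>lborel)"
    by (rule nn_integral_cong) (auto simp: zero_outside_def split: split_indicator)
  hence le: "(\<integral>\<^sup>+ s. ennreal ((zero_outside T (G t) s)\<^sup>2) \<partial>lborel) \<le> ennreal K"
    using assms unfolding kernel_row_bound_def by simp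
  have int: "integrable lborel (\<lambda>s. (zero_outside T (G t) s)\<^sup>2)"
    using meas le by (intro integrableI_nonneg) (auto simp: measurable_lborel1 order_le_less_trans)
  show "L2_on T (G t)" unfolding L2_on_def using meas int by simp
  have "ennreal (l2inner T (G t) (G t)) = (\<integral>\<^sup>+ s. ennreal ((zero_outside T (G t) s)\<^sup>2) \<partial>lborel)"
    unfolding l2inner_self_eq_integral using int by (intro nn_integral_eq_integral[symmetric]) auto
  with le have "ennreal (l2inner T (G t) (G t)) \<le> ennreal K" by simp
  thus "l2inner T (G t) (G t) \<le> K"
    using kernel_row_bound_nonneg[OF assms(1)] by (simp add: ennreal_le_iff)
qed

lemma kop_eq_l2inner: "kop T G f t = l2inner T (G t) f"
  unfolding kop_def l2inner_def ..

lemma kop_eq_integral: "kop T G f t = (\<integral>s. G t s * zero_outside T f s \<partial>lborel)"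
  unfolding kop_def set_lebesgue_integral_def zero_outside_def
  by (rule Bochner_Integration.integral_cong) (auto split: split_indicator)

lemma kop_lincomb:
  assumes "kernel_row_bound T G K" "L2_on T f" "L2_on T g" "t \<in> {0..T}"
  shows "kop T G (\<lambda>s. a * f s + b * g s) t = a * kop T G f t + b * kop T G g t"
  unfolding kop_eq_l2inner using l2inner_lincomb_right[OF assms(2,3) L2_on_kernel_row[OF assms(1,4)]] .

lemma kop_power2_le:
  assumes "kernel_row_bound T G K" "L2_on T f" "t \<in> {0..T}"
  shows "(kop T G f t)\<^sup>2 \<le> K * l2inner T f f"
proof -
  let ?P = "l2inner T (G t) (G t)" and ?F = "l2inner T f f"
  have "\<bar>kop T G f t\<bar> \<le> sqrt (?P * ?F)"
    unfolding kop_eq_l2inner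
    by (rule le_sqrt_mult_if_amgm_bound[OF l2inner_self_nonneg l2inner_self_nonneg])
       (rule abs_l2inner_le_amgm[OF L2_on_kernel_row[OF assms(1,3)] assms(2)])
  hence "(kop T G f t)\<^sup>2 \<le> ?P * ?F"
    by (metis abs_ge_zero l2inner_self_nonneg mult_nonneg_nonneg power2_abs power_mono real_sqrt_pow2)
  also have "\<dots> \<le> K * ?F"
    by (rule mult_right_mono[OF l2inner_kernel_row_le[OF assms(1,3)] l2inner_self_nonneg])
  finally show ?thesis .
qed

lemma kop_measurable:
  assumes "kernel_row_bound T G K" "L2_on T f"
  shows "kop T G f \<in> borel_measurable borel"
proof -
  have [measurable]: "(\<lambda>(t,s). G t s) \<in> borel_measurable (borel \<Otimes>\<^sub>M borel)"
    using kernel_row_bound_measurable[OF assms(1)] .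
  have [measurable]: "zero_outside T f \<in> borel_measurable borel"
    using assms(2) by (simp add: L2_on_def)
  have "(\<lambda>(t,s). G t s * zero_outside T f s) \<in> borel_measurable (borel \<Otimes>\<^sub>M lborel)"
    by (simp add: measurable_cong_sets[OF sets_pair_measure_cong[OF refl sets_lborel] refl])
  from lborel.borel_measurable_lebesgue_integral[OF this]
  show ?thesis unfolding kop_eq_integral[abs_def] by simp
qed

lemma
  assumes "kernel_row_bound T G K" "L2_on T f" "T \<ge> 0"
  shows L2_on_kop: "L2_on T (kop T G f)"
    and l2inner_kop_self_le: "l2inner T (kop T G f) (kop T G f) \<le> T * K * l2inner T f f"
proof -
  have [measurable]: "kop T G f \<in> borel_measurable borel" by (rule kop_measurable[OF assms(1,2)])
  have meas: "zero_outside T (kop T G f) \<in> borel_measurable borel"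
    unfolding zero_outside_def by measurable
  let ?B = "\<lambda>s. indicator {0..T} s * (K * l2inner T f f)"
  have intB: "integrable lborel ?B"
    using integrable_indicator[of "{0..T}" lborel "K * l2inner T f f"] assms(3)
    by (simp add: emeasure_lborel_Icc)
  have le: "(zero_outside T (kop T G f) s)\<^sup>2 \<le> ?B s" for s
    using kop_power2_le[OF assms(1,2)] by (auto simp: zero_outside_def split: split_indicator)
  have "0 \<le> ?B s" for s
    using kernel_row_bound_nonneg[OF assms(1)] l2inner_self_nonneg[of T f] by simp
  hence int: "integrable lborel (\<lambda>s. (zero_outside T (kop T G f) s)\<^sup>2)"
    using meas le by (intro Bochner_Integration.integrable_bound[OF intB]) (auto simp: measurable_lborel1)
  show "L2_on T (kop T G f)" unfolding L2_on_def using meas int by simp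
  have "l2inner T (kop T G f) (kop T G f) \<le> (\<integral>s. ?B s \<partial>lborel)"
    unfolding l2inner_self_eq_integral[of T "kop T G f"] by (rule integral_mono[OF int intB le])
  also have "\<dots> = T * K * l2inner T f f"
    using assms(3) by (simp add: mult.commute[of "indicator _ _"])
  finally show "l2inner T (kop T G f) (kop T G f) \<le> T * K * l2inner T f f" .
qed

lemma abs_l2inner_kop_le_amgm:
  assumes "kernel_row_bound T G K" "L2_on T f" "L2_on T g" "T \<ge> 0" "c > 0"
  shows "\<bar>l2inner T f (kop T G g)\<bar> \<le> (c * l2inner T f f + T * K * l2inner T g g / c) / 2"
proof -
  have "\<bar>l2inner T f (kop T G g)\<bar>
      \<le> (c * l2inner T f f + l2inner T (kop T G g) (kop T G g) / c) / 2"
    by (rule abs_l2inner_le_amgm[OF assms(2) L2_on_kop[OF assms(1,3,4)] assms(5)])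
  also have "\<dots> \<le> (c * l2inner T f f + T * K * l2inner T g g / c) / 2"
    using l2inner_kop_self_le[OF assms(1,3,4)] assms(5) by (simp add: divide_right_mono)
  finally show ?thesis .
qed

lemma l2inner_kop_lincomb:
  assumes "kernel_row_bound T G K" "L2_on T f" "L2_on T g" "L2_on T h" "T \<ge> 0"
  shows "l2inner T h (kop T G (\<lambda>s. a * f s + b * g s))
       = a * l2inner T h (kop T G f) + b * l2inner T h (kop T G g)"
proof -
  have "l2inner T h (kop T G (\<lambda>s. a * f s + b * g s))
      = l2inner T h (\<lambda>s. a * kop T G f s + b * kop T G g s)"
    by (rule l2inner_cong) (auto intro: kop_lincomb[OF assms(1-3)])
  also have "\<dots> = a * l2inner T h (kop T G f) + b * l2inner T h (kop T G g)"
    by (rule l2inner_lincomb_right[OF L2_on_kop[OF assms(1,2,5)] L2_on_kop[OF assms(1,3,5)] assms(4)])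
  finally show ?thesis .
qed

lemma
  assumes "admissible_kernel T G"
  shows admissible_kernel_row_bound: "kernel_row_bound T G (row_bound T G)"
    and admissible_kernel_adj_row_bound: "kernel_row_bound T (adj_kernel G) (row_bound T (adj_kernel G))"
proof -
  from assms obtain K1 K2 where
    meas: "(\<lambda>(t,s). G t s) \<in> borel_measurable borel" and
    rows: "\<forall>t\<in>{0..T}. (\<integral>\<^sup>+ s\<in>{0..T}. ennreal ((G t s)\<^sup>2) \<partial>lborel) \<le> ennreal K1" and
    cols: "\<forall>s\<in>{0..T}. (\<integral>\<^sup>+ t\<in>{0..T}. ennreal ((G t s)\<^sup>2) \<partial>lborel) \<le> ennreal K2"
    unfolding admissible_kernel_def by blast
  have "kernel_row_bound T G (max K1 0)"
    using meas rows unfolding kernel_row_bound_def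
    by (auto intro: order_trans ennreal_leI)
  thus "kernel_row_bound T G (row_bound T G)"
    unfolding row_bound_def by (rule someI)
  have "(\<lambda>(t,s). G s t) \<in> borel_measurable (borel \<Otimes>\<^sub>M borel)"
    using measurable_pair_swap[OF meas[unfolded borel_prod[symmetric]]] by (simp add: case_prod_beta)
  hence "kernel_row_bound T (adj_kernel G) (max K2 0)"
    using cols unfolding kernel_row_bound_def adj_kernel_def
    by (auto simp: borel_prod intro: order_trans ennreal_leI)
  thus "kernel_row_bound T (adj_kernel G) (row_bound T (adj_kernel G))"
    unfolding row_bound_def by (rule someI)
qed

text \<open>Swapping the order of integration (Fubini) moves the adjoint onto the other argument;
  the square-integrability of the kernel on \<open>[0,T]\<^sup>2\<close> makes the double integral absolutely
  convergent.\<close>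

lemma l2inner_kop_adj_kernel:
  assumes meas: "(\<lambda>(t,s). G t s) \<in> borel_measurable borel"
    and square_int: "(\<integral>\<^sup>+ p\<in>{0..T}\<times>{0..T}. ennreal ((G (fst p) (snd p))\<^sup>2) \<partial>lborel) < \<infinity>"
    and f: "L2_on T f"
  shows "l2inner T f (kop T (adj_kernel G) f) = l2inner T f (kop T G f)"
proof -
  define fi where "fi = zero_outside T f"
  define H where "H = (\<lambda>s t. fi s * G s t * fi t)"
  define Gsq where "Gsq = (\<lambda>(s,t). indicator {0..T} s * indicator {0..T} t * (G s t)\<^sup>2 :: real)"
  define fsq where "fsq = (\<lambda>(s::real,t::real). (fi s)\<^sup>2 * (fi t)\<^sup>2)"
  have [measurable]: "fi \<in> borel_measurable borel" and fi2: "integrable lborel (\<lambda>s. (fi s)\<^sup>2)"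
    using f by (simp_all add: L2_on_def fi_def)
  have Gm[measurable]: "(\<lambda>(s,t). G s t) \<in> borel_measurable (lborel \<Otimes>\<^sub>M lborel)"
    using meas by (simp add: borel_prod[symmetric]
        measurable_cong_sets[OF sets_pair_measure_cong[OF sets_lborel sets_lborel] refl])
  have int_Gsq: "integrable (lborel \<Otimes>\<^sub>M lborel) Gsq"
  proof (rule integrableI_nonneg)
    show "Gsq \<in> borel_measurable (lborel \<Otimes>\<^sub>M lborel)" unfolding Gsq_def by measurable
    show "AE x in lborel \<Otimes>\<^sub>M lborel. 0 \<le> Gsq x" by (auto simp: Gsq_def intro!: AE_I2)
    have "(\<integral>\<^sup>+ x. ennreal (Gsq x) \<partial>(lborel \<Otimes>\<^sub>M lborel))
        = (\<integral>\<^sup>+ p\<in>{0..T}\<times>{0..T}. ennreal ((G (fst p) (snd p))\<^sup>2) \<partial>lborel)"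
      unfolding lborel_prod Gsq_def by (rule nn_integral_cong) (auto simp: indicator_def)
    thus "(\<integral>\<^sup>+ x. ennreal (Gsq x) \<partial>(lborel \<Otimes>\<^sub>M lborel)) < \<infinity>" using square_int by simp
  qed
  have int_fsq: "integrable (lborel \<Otimes>\<^sub>M lborel) fsq"
  proof (rule lborel_pair.Fubini_integrable)
    show "fsq \<in> borel_measurable (lborel \<Otimes>\<^sub>M lborel)" unfolding fsq_def by measurable
    show "integrable lborel (\<lambda>x. \<integral>y. norm (fsq (x, y)) \<partial>lborel)"
      using fi2 by (simp add: fsq_def)
    show "AE x in lborel. integrable lborel (\<lambda>y. fsq (x, y))"
      using fi2 by (intro AE_I2) (simp add: fsq_def)
  qed
  have int_H: "integrable (lborel \<Otimes>\<^sub>M lborel) (case_prod H)"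
  proof (rule Bochner_Integration.integrable_bound)
    show "integrable (lborel \<Otimes>\<^sub>M lborel) (\<lambda>x. (Gsq x + fsq x) / 2)"
      using int_Gsq int_fsq by simp
    show "case_prod H \<in> borel_measurable (lborel \<Otimes>\<^sub>M lborel)" unfolding H_def by measurable
    show "AE x in lborel \<Otimes>\<^sub>M lborel. norm (case_prod H x) \<le> norm ((Gsq x + fsq x) / 2)"
    proof (rule AE_I2)
      fix x :: "real \<times> real"
      obtain s t where x: "x = (s, t)" by (cases x)
      have "H s t = (indicator {0..T} s * indicator {0..T} t * G s t) * (fi s * fi t)"
        by (auto simp: H_def fi_def zero_outside_def split: split_indicator)
      hence "\<bar>H s t\<bar> \<le> ((indicator {0..T} s * indicator {0..T} t * G s t)\<^sup>2 + (fi s * fi t)\<^sup>2) / 2"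
        using abs_mult_le_amgm[of 1] by simp
      also have "\<dots> = (Gsq (s, t) + fsq (s, t)) / 2"
        by (auto simp: Gsq_def fsq_def power_mult_distrib split: split_indicator)
      finally show "norm (case_prod H x) \<le> norm ((Gsq x + fsq x) / 2)"
        by (simp add: x Gsq_def fsq_def)
    qed
  qed
  have "l2inner T f (kop T (adj_kernel G) f) = (\<integral>t. (\<integral>s. H s t \<partial>lborel) \<partial>lborel)"
    unfolding l2inner_eq_integral' kop_eq_integral fi_def[symmetric] H_def adj_kernel_def
    by (simp add: mult.commute mult.left_commute)
  also have "\<dots> = (\<integral>s. (\<integral>t. H s t \<partial>lborel) \<partial>lborel)"
    by (rule lborel_pair.Fubini_integral[OF int_H])
  also have "\<dots> = l2inner T f (kop T G f)"
    unfolding l2inner_eq_integral' kop_eq_integral fi_def[symmetric] H_def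
    by (simp add: mult.commute mult.left_commute)
  finally show ?thesis .
qed

lemma nonneg_definite_L2_on:
  assumes "nonneg_definite T G" "L2_on T f"
  shows "0 \<le> (LINT t:{0..T}|lborel. (LINT s:{0..T}|lborel. (G t s + G s t) * f s * f t))"
proof -
  define fi where "fi = zero_outside T f"
  have fi_eq: "fi s = f s" if "s \<in> {0..T}" for s using that by (simp add: fi_def zero_outside_def)
  have "L2_fun T fi" unfolding L2_fun_def set_integrable_def
  proof
    show "fi \<in> borel_measurable lborel" using L2_on_measurable[OF assms(2)] by (simp add: fi_def)
    have "(\<lambda>x. indicator {0..T} x *\<^sub>R (fi x)\<^sup>2) = (\<lambda>s. (fi s)\<^sup>2)"
      by (auto simp: fi_def zero_outside_def split: split_indicator)
    thus "integrable lborel (\<lambda>x. indicator {0..T} x *\<^sub>R (fi x)\<^sup>2)"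
      using assms(2) by (simp add: L2_on_def fi_def)
  qed
  hence "0 \<le> (LINT t:{0..T}|lborel. (LINT s:{0..T}|lborel. (G t s + G s t) * fi s * fi t))"
    using assms(1) unfolding nonneg_definite_def by blast
  also have "\<dots> = (LINT t:{0..T}|lborel. (LINT s:{0..T}|lborel. (G t s + G s t) * f s * f t))"
  proof (rule set_lebesgue_integral_cong, simp, intro allI impI)
    fix t assume "t \<in> {0..T}"
    thus "(LINT s:{0..T}|lborel. (G t s + G s t) * fi s * fi t)
        = (LINT s:{0..T}|lborel. (G t s + G s t) * f s * f t)"
      by (intro set_lebesgue_integral_cong) (auto simp: fi_eq)
  qed
  finally show ?thesis .
qed

lemma double_integral_symmetrized_kernel:
  assumes "kernel_row_bound T G K" "kernel_row_bound T (adj_kernel G) K'" "L2_on T f" "T \<ge> 0"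
  shows "(LINT t:{0..T}|lborel. (LINT s:{0..T}|lborel. (G t s + G s t) * f s * f t))
       = l2inner T f (kop T G f) + l2inner T f (kop T (adj_kernel G) f)"
proof -
  have inner: "(LINT s:{0..T}|lborel. (G t s + G s t) * f s * f t)
      = f t * kop T G f t + f t * kop T (adj_kernel G) f t" if t: "t \<in> {0..T}" for t
  proof -
    have "(LINT s:{0..T}|lborel. (G t s + G s t) * f s * f t)
        = l2inner T (\<lambda>s. 1 * G t s + 1 * adj_kernel G t s) (\<lambda>s. f t * f s + 0 * f s)"
      unfolding l2inner_def by (auto simp: adj_kernel_def algebra_simps)
    also have "\<dots> = f t * kop T G f t + f t * kop T (adj_kernel G) f t"
      using l2inner_lincomb_left[OF L2_on_kernel_row[OF assms(1) t] L2_on_kernel_row[OF assms(2) t]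
          L2_on_lincomb[OF assms(3,3), of "f t" 0], of 1 1]
        l2inner_lincomb_right[OF assms(3,3) L2_on_kernel_row[OF assms(1) t], of "f t" 0]
        l2inner_lincomb_right[OF assms(3,3) L2_on_kernel_row[OF assms(2) t], of "f t" 0]
      by (simp add: kop_eq_l2inner)
    finally show ?thesis .
  qed
  have "(LINT t:{0..T}|lborel. (LINT s:{0..T}|lborel. (G t s + G s t) * f s * f t))
      = l2inner T f (\<lambda>t. 1 * kop T G f t + 1 * kop T (adj_kernel G) f t)"
    unfolding l2inner_def
    by (intro set_lebesgue_integral_cong) (simp, intro allI impI, simp only: inner mult_1 distrib_left)
  also have "\<dots> = l2inner T f (kop T G f) + l2inner T f (kop T (adj_kernel G) f)"
    using l2inner_lincomb_right[OF L2_on_kop[OF assms(1,3,4)] L2_on_kop[OF assms(2,3,4)] assms(3), of 1 1]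
    by simp
  finally show ?thesis .
qed

lemma l2inner_kop_self_nonneg:
  assumes "admissible_kernel T G" "L2_on T f" "T \<ge> 0"
  shows "0 \<le> l2inner T f (kop T G f)"
proof -
  have "0 \<le> l2inner T f (kop T G f) + l2inner T f (kop T (adj_kernel G) f)"
    using nonneg_definite_L2_on[of T G f] double_integral_symmetrized_kernel[OF
        admissible_kernel_row_bound[OF assms(1)] admissible_kernel_adj_row_bound[OF assms(1)] assms(2,3)]
      assms by (simp add: admissible_kernel_def)
  moreover have "l2inner T f (kop T (adj_kernel G) f) = l2inner T f (kop T G f)"
    using assms by (intro l2inner_kop_adj_kernel) (auto simp: admissible_kernel_def)
  ultimately show ?thesis by simp
qed

section \<open>Square-integrable processes\<close>

definition zero_outside_proc :: "real \<Rightarrow> (real \<Rightarrow> 'a \<Rightarrow> real) \<Rightarrow> real \<Rightarrow> 'a \<Rightarrow> real" where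
  "zero_outside_proc T u = (\<lambda>s \<omega>. indicator {0..T} s * u s \<omega>)"

definition L2_proc :: "'a measure \<Rightarrow> real \<Rightarrow> (real \<Rightarrow> 'a \<Rightarrow> real) \<Rightarrow> bool" where
  "L2_proc M T u \<longleftrightarrow>
     (\<lambda>(s,\<omega>). zero_outside_proc T u s \<omega>) \<in> borel_measurable (lborel \<Otimes>\<^sub>M M) \<and>
     integrable (lborel \<Otimes>\<^sub>M M) (\<lambda>(s,\<omega>). (zero_outside_proc T u s \<omega>)\<^sup>2)"

definition einner :: "'a measure \<Rightarrow> real \<Rightarrow> (real \<Rightarrow> 'a \<Rightarrow> real) \<Rightarrow> (real \<Rightarrow> 'a \<Rightarrow> real) \<Rightarrow> real" where
  "einner M T x y = (\<integral>\<omega>. l2inner T (\<lambda>t. x t \<omega>) (\<lambda>t. y t \<omega>) \<partial>M)"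

definition einner_kop :: "'a measure \<Rightarrow> real \<Rightarrow> (real \<Rightarrow> real \<Rightarrow> real)
    \<Rightarrow> (real \<Rightarrow> 'a \<Rightarrow> real) \<Rightarrow> (real \<Rightarrow> 'a \<Rightarrow> real) \<Rightarrow> real" where
  "einner_kop M T G x y = (\<integral>\<omega>. l2inner T (\<lambda>t. x t \<omega>) (kop T G (\<lambda>t. y t \<omega>)) \<partial>M)"

definition lincomb :: "real \<Rightarrow> (real \<Rightarrow> 'a \<Rightarrow> real) \<Rightarrow> real \<Rightarrow> (real \<Rightarrow> 'a \<Rightarrow> real) \<Rightarrow> real \<Rightarrow> 'a \<Rightarrow> real" where
  "lincomb a x b y = (\<lambda>t \<omega>. a * x t \<omega> + b * y t \<omega>)"

definition lincomb_closed :: "(real \<Rightarrow> 'a \<Rightarrow> real) set \<Rightarrow> bool" where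
  "lincomb_closed S \<longleftrightarrow> (\<lambda>t \<omega>. 0) \<in> S \<and> (\<forall>x\<in>S. \<forall>y\<in>S. \<forall>a b. lincomb a x b y \<in> S)"

lemma lincomb_closed_sum_divide:
  assumes "lincomb_closed S" "finite A" "\<And>j. j \<in> A \<Longrightarrow> x j \<in> S"
  shows "(\<lambda>t \<omega>. (\<Sum>j\<in>A. x j t \<omega>) / c) \<in> S"
proof -
  have sum: "(\<lambda>t \<omega>. \<Sum>j\<in>A. x j t \<omega>) \<in> S"
    using assms(2,3)
  proof (induction A rule: finite_induct)
    case empty
    thus ?case using assms(1) by (simp add: lincomb_closed_def)
  next
    case (insert j A)
    hence "lincomb 1 (x j) 1 (\<lambda>t \<omega>. \<Sum>j\<in>A. x j t \<omega>) \<in> S"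
      using assms(1) by (simp add: lincomb_closed_def)
    thus ?case using insert by (simp add: lincomb_def)
  qed
  hence "lincomb (1 / c) (\<lambda>t \<omega>. \<Sum>j\<in>A. x j t \<omega>) 0 (\<lambda>t \<omega>. \<Sum>j\<in>A. x j t \<omega>) \<in> S"
    using assms(1) by (simp add: lincomb_closed_def)
  thus ?thesis by (simp add: lincomb_def)
qed

lemma zero_outside_path: "zero_outside T (\<lambda>t. u t \<omega>) = (\<lambda>s. zero_outside_proc T u s \<omega>)"
  by (simp add: zero_outside_def zero_outside_proc_def)

lemma integral_eq_lincomb_AE:
  fixes f g h :: "'b \<Rightarrow> real"
  assumes "integrable N f" "integrable N g" "h \<in> borel_measurable N"
    and "AE x in N. h x = a * f x + b * g x"
  shows "(\<integral>x. h x \<partial>N) = a * (\<integral>x. f x \<partial>N) + b * (\<integral>x. g x \<partial>N)"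
proof -
  have "(\<integral>x. h x \<partial>N) = (\<integral>x. a * f x + b * g x \<partial>N)"
    using assms by (intro integral_cong_AE) auto
  thus ?thesis using assms(1,2) by simp
qed

locale finite_horizon = prob_space M for M :: "'a measure" +
  fixes T :: real
  assumes T_nonneg: "T \<ge> 0"
begin

sublocale lborel_M: pair_sigma_finite lborel M
  unfolding pair_sigma_finite_def
  using lborel.sigma_finite_measure_axioms sigma_finite_measure_axioms by simp

definition enorm :: "(real \<Rightarrow> 'a \<Rightarrow> real) \<Rightarrow> real" where
  "enorm u = sqrt (einner M T u u)"

abbreviation path_sqnorm :: "(real \<Rightarrow> 'a \<Rightarrow> real) \<Rightarrow> 'a \<Rightarrow> real" where
  "path_sqnorm u \<omega> \<equiv> l2inner T (\<lambda>t. u t \<omega>) (\<lambda>t. u t \<omega>)"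

lemma L2_proc_measurable:
  "L2_proc M T u \<Longrightarrow> (\<lambda>(s,\<omega>). zero_outside_proc T u s \<omega>) \<in> borel_measurable (lborel \<Otimes>\<^sub>M M)"
  by (simp add: L2_proc_def)

lemma L2_proc_integrable:
  "L2_proc M T u \<Longrightarrow> integrable (lborel \<Otimes>\<^sub>M M) (\<lambda>(s,\<omega>). (zero_outside_proc T u s \<omega>)\<^sup>2)"
  by (simp add: L2_proc_def)

lemma AE_L2_on_path:
  assumes "L2_proc M T u"
  shows "AE \<omega> in M. L2_on T (\<lambda>t. u t \<omega>)"
proof -
  have "AE \<omega> in M. integrable lborel (\<lambda>s. (zero_outside_proc T u s \<omega>)\<^sup>2)"
    using lborel_M.AE_integrable_snd[of "\<lambda>s \<omega>. (zero_outside_proc T u s \<omega>)\<^sup>2"]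
      L2_proc_integrable[OF assms] by simp
  thus ?thesis using AE_space
  proof eventually_elim
    case (elim \<omega>)
    have "(\<lambda>s. zero_outside_proc T u s \<omega>) \<in> borel_measurable borel"
      using measurable_Pair1[OF L2_proc_measurable[OF assms] elim(2)] by simp
    thus ?case using elim(1) by (simp add: L2_on_def zero_outside_path)
  qed
qed

lemma l2inner_path_self_eq:
  "l2inner T (\<lambda>t. u t \<omega>) (\<lambda>t. u t \<omega>) = (\<integral>s. (zero_outside_proc T u s \<omega>)\<^sup>2 \<partial>lborel)"
  by (simp add: l2inner_self_eq_integral zero_outside_path)

lemma integrable_path_sqnorm:
  assumes "L2_proc M T u"
  shows "integrable M (path_sqnorm u)"
  unfolding l2inner_path_self_eq
  using lborel_M.integrable_snd[of "\<lambda>s \<omega>. (zero_outside_proc T u s \<omega>)\<^sup>2"] L2_proc_integrable[OF assms]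
  by simp

lemma einner_self_nonneg: "0 \<le> einner M T u u"
  unfolding einner_def by (rule integral_nonneg_AE) (simp add: l2inner_self_nonneg)

lemma enorm_nonneg: "0 \<le> enorm u"
  unfolding enorm_def using einner_self_nonneg[of u] by simp

lemma enorm_power2: "(enorm u)\<^sup>2 = einner M T u u"
  unfolding enorm_def using einner_self_nonneg[of u] by simp

lemma einner_commute: "einner M T u w = einner M T w u"
  unfolding einner_def by (simp add: l2inner_commute)

lemma sqnorm2T_eq_nn_integral:
  assumes "(\<lambda>(s,\<omega>). zero_outside_proc T u s \<omega>) \<in> borel_measurable (lborel \<Otimes>\<^sub>M M)"
  shows "sqnorm2T M T u = (\<integral>\<^sup>+ p. ennreal ((case_prod (zero_outside_proc T u) p)\<^sup>2) \<partial>(lborel \<Otimes>\<^sub>M M))"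
proof -
  have meas: "(\<lambda>p. ennreal ((case_prod (zero_outside_proc T u) p)\<^sup>2)) \<in> borel_measurable (lborel \<Otimes>\<^sub>M M)"
    using assms by measurable
  have "sqnorm2T M T u = (\<integral>\<^sup>+ t. (\<integral>\<^sup>+ \<omega>. ennreal ((zero_outside_proc T u t \<omega>)\<^sup>2) \<partial>M) \<partial>lborel)"
    unfolding sqnorm2T_def
    by (rule nn_integral_cong) (auto simp: zero_outside_proc_def split: split_indicator)
  also have "\<dots> = (\<integral>\<^sup>+ p. ennreal ((case_prod (zero_outside_proc T u) p)\<^sup>2) \<partial>(lborel \<Otimes>\<^sub>M M))"
    using nn_integral_fst[OF meas] by simp
  finally show ?thesis .
qed

lemma sqnorm2T_eq_einner:
  assumes "L2_proc M T u"
  shows "sqnorm2T M T u = ennreal (einner M T u u)"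
proof -
  have "einner M T u u = (\<integral>p. (case_prod (zero_outside_proc T u) p)\<^sup>2 \<partial>(lborel \<Otimes>\<^sub>M M))"
    unfolding einner_def l2inner_path_self_eq
    using lborel_M.integral_snd[of "\<lambda>s \<omega>. (zero_outside_proc T u s \<omega>)\<^sup>2"] L2_proc_integrable[OF assms]
    by (simp add: case_prod_beta')
  thus ?thesis
    unfolding sqnorm2T_eq_nn_integral[OF L2_proc_measurable[OF assms]]
    using L2_proc_integrable[OF assms]
    by (simp add: case_prod_beta' nn_integral_eq_integral)
qed

lemma sqnorm2T_le_const:
  assumes "\<And>t. t \<in> {0..T} \<Longrightarrow> (\<integral>\<^sup>+ \<omega>. ennreal ((u t \<omega>)\<^sup>2) \<partial>M) \<le> c"
  shows "sqnorm2T M T u \<le> c * ennreal T"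
proof -
  have "sqnorm2T M T u \<le> (\<integral>\<^sup>+ t. c * indicator {0..T} t \<partial>lborel)"
    unfolding sqnorm2T_def
    by (rule nn_integral_mono) (use assms in \<open>auto split: split_indicator\<close>)
  also have "\<dots> = c * ennreal T"
    using T_nonneg by (simp add: nn_integral_cmult_indicator emeasure_lborel_Icc)
  finally show ?thesis .
qed

lemma l2inner_path_measurable:
  assumes "L2_proc M T u" "L2_proc M T w"
  shows "(\<lambda>\<omega>. l2inner T (\<lambda>t. u t \<omega>) (\<lambda>t. w t \<omega>)) \<in> borel_measurable M"
proof -
  have [measurable]: "(\<lambda>(s,\<omega>). zero_outside_proc T u s \<omega>) \<in> borel_measurable (lborel \<Otimes>\<^sub>M M)"
    "(\<lambda>(s,\<omega>). zero_outside_proc T w s \<omega>) \<in> borel_measurable (lborel \<Otimes>\<^sub>M M)"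
    using L2_proc_measurable assms by auto
  have "(\<lambda>\<omega>. \<integral>s. zero_outside_proc T u s \<omega> * zero_outside_proc T w s \<omega> \<partial>lborel) \<in> borel_measurable M"
    by measurable
  thus ?thesis by (simp add: l2inner_eq_integral zero_outside_path)
qed

lemma l2inner_path_kop_measurable:
  assumes "L2_proc M T u" "L2_proc M T w" "kernel_row_bound T G K"
  shows "(\<lambda>\<omega>. l2inner T (\<lambda>t. u t \<omega>) (kop T G (\<lambda>t. w t \<omega>))) \<in> borel_measurable M"
proof -
  have [measurable]: "(\<lambda>(s,\<omega>). zero_outside_proc T u s \<omega>) \<in> borel_measurable (lborel \<Otimes>\<^sub>M M)"
    "(\<lambda>(s,\<omega>). zero_outside_proc T w s \<omega>) \<in> borel_measurable (lborel \<Otimes>\<^sub>M M)"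
    "(\<lambda>(t,s). G t s) \<in> borel_measurable (lborel \<Otimes>\<^sub>M lborel)"
    using L2_proc_measurable assms kernel_row_bound_measurable_lborel by auto
  have "(\<lambda>\<omega>. \<integral>s. zero_outside_proc T u s \<omega>
      * (indicator {0..T} s * (\<integral>r. G s r * zero_outside_proc T w r \<omega> \<partial>lborel)) \<partial>lborel)
      \<in> borel_measurable M"
    by measurable
  thus ?thesis
    by (simp add: l2inner_eq_integral kop_eq_integral zero_outside_path zero_outside_def)
qed

lemma L2_proc_lincomb:
  assumes "L2_proc M T u" "L2_proc M T w"
  shows "L2_proc M T (lincomb a u b w)"
proof -
  let ?u = "\<lambda>(s,\<omega>). zero_outside_proc T u s \<omega>" and ?w = "\<lambda>(s,\<omega>). zero_outside_proc T w s \<omega>"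
  have [measurable]: "?u \<in> borel_measurable (lborel \<Otimes>\<^sub>M M)" "?w \<in> borel_measurable (lborel \<Otimes>\<^sub>M M)"
    using L2_proc_measurable assms by auto
  have eq: "(\<lambda>(s,\<omega>). zero_outside_proc T (lincomb a u b w) s \<omega>) = (\<lambda>p. a * ?u p + b * ?w p)"
    and eq2: "(\<lambda>(s,\<omega>). (zero_outside_proc T (lincomb a u b w) s \<omega>)\<^sup>2) = (\<lambda>p. (a * ?u p + b * ?w p)\<^sup>2)"
    by (auto simp: zero_outside_proc_def lincomb_def fun_eq_iff algebra_simps)
  have "integrable (lborel \<Otimes>\<^sub>M M) (\<lambda>p. (a * ?u p + b * ?w p)\<^sup>2)"
  proof (rule Bochner_Integration.integrable_bound)
    show "integrable (lborel \<Otimes>\<^sub>M M) (\<lambda>p. 2 * a\<^sup>2 * (?u p)\<^sup>2 + 2 * b\<^sup>2 * (?w p)\<^sup>2)"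
      using L2_proc_integrable[OF assms(1)] L2_proc_integrable[OF assms(2)]
      by (simp add: case_prod_beta')
    show "AE p in lborel \<Otimes>\<^sub>M M. norm ((a * ?u p + b * ?w p)\<^sup>2) \<le> norm (2 * a\<^sup>2 * (?u p)\<^sup>2 + 2 * b\<^sup>2 * (?w p)\<^sup>2)"
      using power2_lincomb_le by (intro AE_I2) (simp del: power2_sum)
  qed measurable
  moreover have "(\<lambda>p. a * ?u p + b * ?w p) \<in> borel_measurable (lborel \<Otimes>\<^sub>M M)"
    by measurable
  ultimately show ?thesis unfolding L2_proc_def eq eq2 by simp
qed

lemma L2_proc_zero: "L2_proc M T (\<lambda>t \<omega>. 0)"
  by (simp add: L2_proc_def zero_outside_proc_def case_prod_beta')

lemma lincomb_closed_L2_proc: "lincomb_closed {u. L2_proc M T u}"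
  unfolding lincomb_closed_def using L2_proc_zero L2_proc_lincomb by blast

lemma integrable_l2inner_path:
  assumes "L2_proc M T u" "L2_proc M T w"
  shows "integrable M (\<lambda>\<omega>. l2inner T (\<lambda>t. u t \<omega>) (\<lambda>t. w t \<omega>))"
proof (rule Bochner_Integration.integrable_bound)
  show "integrable M (\<lambda>\<omega>. (path_sqnorm u \<omega> + path_sqnorm w \<omega>) / 2)"
    using integrable_path_sqnorm[OF assms(1)] integrable_path_sqnorm[OF assms(2)] by auto
  show "(\<lambda>\<omega>. l2inner T (\<lambda>t. u t \<omega>) (\<lambda>t. w t \<omega>)) \<in> borel_measurable M"
    by (rule l2inner_path_measurable[OF assms])
  show "AE \<omega> in M. norm (l2inner T (\<lambda>t. u t \<omega>) (\<lambda>t. w t \<omega>)) \<le> norm ((path_sqnorm u \<omega> + path_sqnorm w \<omega>) / 2)"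
    using AE_L2_on_path[OF assms(1)] AE_L2_on_path[OF assms(2)]
  proof eventually_elim
    case (elim \<omega>)
    thus ?case using abs_l2inner_le_amgm[OF elim, of 1] l2inner_self_nonneg[of T "\<lambda>t. u t \<omega>"]
        l2inner_self_nonneg[of T "\<lambda>t. w t \<omega>"] by simp
  qed
qed

lemma integrable_l2inner_path_kop:
  assumes "L2_proc M T u" "L2_proc M T w" "kernel_row_bound T G K"
  shows "integrable M (\<lambda>\<omega>. l2inner T (\<lambda>t. u t \<omega>) (kop T G (\<lambda>t. w t \<omega>)))"
proof (rule Bochner_Integration.integrable_bound)
  show "integrable M (\<lambda>\<omega>. (path_sqnorm u \<omega> + T * K * path_sqnorm w \<omega>) / 2)"
    using integrable_path_sqnorm[OF assms(1)] integrable_path_sqnorm[OF assms(2)] by auto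
  show "(\<lambda>\<omega>. l2inner T (\<lambda>t. u t \<omega>) (kop T G (\<lambda>t. w t \<omega>))) \<in> borel_measurable M"
    by (rule l2inner_path_kop_measurable[OF assms])
  show "AE \<omega> in M. norm (l2inner T (\<lambda>t. u t \<omega>) (kop T G (\<lambda>t. w t \<omega>)))
      \<le> norm ((path_sqnorm u \<omega> + T * K * path_sqnorm w \<omega>) / 2)"
    using AE_L2_on_path[OF assms(1)] AE_L2_on_path[OF assms(2)]
  proof eventually_elim
    case (elim \<omega>)
    thus ?case
      using abs_l2inner_kop_le_amgm[OF assms(3) elim T_nonneg, of 1] l2inner_self_nonneg[of T "\<lambda>t. u t \<omega>"]
        l2inner_self_nonneg[of T "\<lambda>t. w t \<omega>"] kernel_row_bound_nonneg[OF assms(3)] T_nonneg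
      by simp
  qed
qed

lemma einner_lincomb_left:
  assumes "L2_proc M T x" "L2_proc M T y" "L2_proc M T w"
  shows "einner M T (lincomb a x b y) w = a * einner M T x w + b * einner M T y w"
  unfolding einner_def
proof (rule integral_eq_lincomb_AE)
  show "(\<lambda>\<omega>. l2inner T (\<lambda>t. lincomb a x b y t \<omega>) (\<lambda>t. w t \<omega>)) \<in> borel_measurable M"
    by (rule l2inner_path_measurable[OF L2_proc_lincomb[OF assms(1,2)] assms(3)])
  show "AE \<omega> in M. l2inner T (\<lambda>t. lincomb a x b y t \<omega>) (\<lambda>t. w t \<omega>)
      = a * l2inner T (\<lambda>t. x t \<omega>) (\<lambda>t. w t \<omega>) + b * l2inner T (\<lambda>t. y t \<omega>) (\<lambda>t. w t \<omega>)"
    using AE_L2_on_path[OF assms(1)] AE_L2_on_path[OF assms(2)] AE_L2_on_path[OF assms(3)]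
    by eventually_elim (simp add: lincomb_def l2inner_lincomb_left)
qed (use integrable_l2inner_path assms in auto)

lemma einner_lincomb_right:
  assumes "L2_proc M T x" "L2_proc M T y" "L2_proc M T w"
  shows "einner M T w (lincomb a x b y) = a * einner M T w x + b * einner M T w y"
  using einner_lincomb_left[OF assms] by (simp add: einner_commute)

lemma einner_kop_lincomb_left:
  assumes "L2_proc M T x" "L2_proc M T y" "L2_proc M T w" "kernel_row_bound T G K"
  shows "einner_kop M T G (lincomb a x b y) w = a * einner_kop M T G x w + b * einner_kop M T G y w"
  unfolding einner_kop_def
proof (rule integral_eq_lincomb_AE)
  show "(\<lambda>\<omega>. l2inner T (\<lambda>t. lincomb a x b y t \<omega>) (kop T G (\<lambda>t. w t \<omega>))) \<in> borel_measurable M"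
    by (rule l2inner_path_kop_measurable[OF L2_proc_lincomb[OF assms(1,2)] assms(3,4)])
  show "AE \<omega> in M. l2inner T (\<lambda>t. lincomb a x b y t \<omega>) (kop T G (\<lambda>t. w t \<omega>))
      = a * l2inner T (\<lambda>t. x t \<omega>) (kop T G (\<lambda>t. w t \<omega>))
        + b * l2inner T (\<lambda>t. y t \<omega>) (kop T G (\<lambda>t. w t \<omega>))"
    using AE_L2_on_path[OF assms(1)] AE_L2_on_path[OF assms(2)] AE_L2_on_path[OF assms(3)]
    by eventually_elim (simp add: lincomb_def l2inner_lincomb_left L2_on_kop[OF assms(4) _ T_nonneg])
qed (use integrable_l2inner_path_kop assms in auto)

lemma einner_kop_lincomb_right:
  assumes "L2_proc M T x" "L2_proc M T y" "L2_proc M T w" "kernel_row_bound T G K"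
  shows "einner_kop M T G w (lincomb a x b y) = a * einner_kop M T G w x + b * einner_kop M T G w y"
  unfolding einner_kop_def
proof (rule integral_eq_lincomb_AE)
  show "(\<lambda>\<omega>. l2inner T (\<lambda>t. w t \<omega>) (kop T G (\<lambda>t. lincomb a x b y t \<omega>))) \<in> borel_measurable M"
    by (rule l2inner_path_kop_measurable[OF assms(3) L2_proc_lincomb[OF assms(1,2)] assms(4)])
  show "AE \<omega> in M. l2inner T (\<lambda>t. w t \<omega>) (kop T G (\<lambda>t. lincomb a x b y t \<omega>))
      = a * l2inner T (\<lambda>t. w t \<omega>) (kop T G (\<lambda>t. x t \<omega>))
        + b * l2inner T (\<lambda>t. w t \<omega>) (kop T G (\<lambda>t. y t \<omega>))"
    using AE_L2_on_path[OF assms(1)] AE_L2_on_path[OF assms(2)] AE_L2_on_path[OF assms(3)]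
    by eventually_elim (simp add: lincomb_def l2inner_kop_lincomb[OF assms(4) _ _ _ T_nonneg])
qed (use integrable_l2inner_path_kop assms in auto)

lemma abs_einner_le:
  assumes "L2_proc M T u" "L2_proc M T w"
  shows "\<bar>einner M T u w\<bar> \<le> enorm u * enorm w"
proof -
  have "\<bar>einner M T u w\<bar> \<le> sqrt (einner M T u u * einner M T w w)"
  proof (rule le_sqrt_mult_if_amgm_bound[OF einner_self_nonneg einner_self_nonneg])
    fix c :: real assume c: "c > 0"
    have "\<bar>einner M T u w\<bar> \<le> (\<integral>\<omega>. (c * path_sqnorm u \<omega> + path_sqnorm w \<omega> / c) / 2 \<partial>M)"
      unfolding einner_def
    proof (rule abs_integral_le_AE[OF integrable_l2inner_path[OF assms]])
      show "integrable M (\<lambda>\<omega>. (c * path_sqnorm u \<omega> + path_sqnorm w \<omega> / c) / 2)"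
        using integrable_path_sqnorm[OF assms(1)] integrable_path_sqnorm[OF assms(2)] by auto
      show "AE \<omega> in M. \<bar>l2inner T (\<lambda>t. u t \<omega>) (\<lambda>t. w t \<omega>)\<bar> \<le> (c * path_sqnorm u \<omega> + path_sqnorm w \<omega> / c) / 2"
        using AE_L2_on_path[OF assms(1)] AE_L2_on_path[OF assms(2)]
        by eventually_elim (rule abs_l2inner_le_amgm[OF _ _ c])
    qed
    also have "\<dots> = (c * einner M T u u + einner M T w w / c) / 2"
      unfolding einner_def using integrable_path_sqnorm[OF assms(1)] integrable_path_sqnorm[OF assms(2)]
      by simp
    finally show "\<bar>einner M T u w\<bar> \<le> (c * einner M T u u + einner M T w w / c) / 2" .
  qed
  thus ?thesis unfolding enorm_def by (simp add: real_sqrt_mult)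
qed

lemma abs_einner_kop_le:
  assumes "L2_proc M T u" "L2_proc M T w" "kernel_row_bound T G K"
  shows "\<bar>einner_kop M T G u w\<bar> \<le> sqrt (T * K) * enorm u * enorm w"
proof -
  have K: "K \<ge> 0" by (rule kernel_row_bound_nonneg[OF assms(3)])
  have "\<bar>einner_kop M T G u w\<bar> \<le> sqrt (einner M T u u * (T * K * einner M T w w))"
  proof (rule le_sqrt_mult_if_amgm_bound[OF einner_self_nonneg])
    show "0 \<le> T * K * einner M T w w" using K T_nonneg einner_self_nonneg by simp
    fix c :: real assume c: "c > 0"
    have "\<bar>einner_kop M T G u w\<bar>
        \<le> (\<integral>\<omega>. (c * path_sqnorm u \<omega> + T * K * path_sqnorm w \<omega> / c) / 2 \<partial>M)"
      unfolding einner_kop_def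
    proof (rule abs_integral_le_AE[OF integrable_l2inner_path_kop[OF assms]])
      show "integrable M (\<lambda>\<omega>. (c * path_sqnorm u \<omega> + T * K * path_sqnorm w \<omega> / c) / 2)"
        using integrable_path_sqnorm[OF assms(1)] integrable_path_sqnorm[OF assms(2)] by auto
      show "AE \<omega> in M. \<bar>l2inner T (\<lambda>t. u t \<omega>) (kop T G (\<lambda>t. w t \<omega>))\<bar>
          \<le> (c * path_sqnorm u \<omega> + T * K * path_sqnorm w \<omega> / c) / 2"
        using AE_L2_on_path[OF assms(1)] AE_L2_on_path[OF assms(2)]
        by eventually_elim (rule abs_l2inner_kop_le_amgm[OF assms(3) _ _ T_nonneg c])
    qed
    also have "\<dots> = (c * einner M T u u + T * K * einner M T w w / c) / 2"
      unfolding einner_def using integrable_path_sqnorm[OF assms(1)] integrable_path_sqnorm[OF assms(2)]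
      by simp
    finally show "\<bar>einner_kop M T G u w\<bar> \<le> (c * einner M T u u + T * K * einner M T w w / c) / 2" .
  qed
  also have "\<dots> = sqrt (T * K) * enorm u * enorm w"
    unfolding enorm_def by (simp add: real_sqrt_mult)
  finally show ?thesis .
qed

lemma einner_kop_self_nonneg:
  assumes "admissible_kernel T G" "L2_proc M T u"
  shows "0 \<le> einner_kop M T G u u"
  unfolding einner_kop_def
proof (rule integral_nonneg_AE)
  show "AE \<omega> in M. 0 \<le> l2inner T (\<lambda>t. u t \<omega>) (kop T G (\<lambda>t. u t \<omega>))"
    using AE_L2_on_path[OF assms(2)]
    by eventually_elim (rule l2inner_kop_self_nonneg[OF assms(1) _ T_nonneg])
qed

lemma enorm_add_le:
  assumes "L2_proc M T x" "L2_proc M T y"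
  shows "enorm (lincomb 1 x 1 y) \<le> enorm x + enorm y"
proof -
  have "(enorm (lincomb 1 x 1 y))\<^sup>2 = einner M T x x + einner M T x y + einner M T y x + einner M T y y"
    using einner_lincomb_left[OF assms L2_proc_lincomb[OF assms], of 1 1]
      einner_lincomb_right[OF assms assms(1), of 1 1] einner_lincomb_right[OF assms assms(2), of 1 1]
    by (simp add: enorm_power2)
  also have "\<dots> \<le> (enorm x + enorm y)\<^sup>2"
    using abs_einner_le[OF assms] abs_einner_le[OF assms(2,1)]
    by (auto simp: enorm_power2[symmetric] power2_eq_square algebra_simps abs_le_iff)
  finally show ?thesis
    using enorm_nonneg by (meson add_nonneg_nonneg power2_le_imp_le)
qed

lemma enorm_scale:
  assumes "L2_proc M T x"
  shows "enorm (lincomb c x 0 x) = \<bar>c\<bar> * enorm x"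
proof -
  have "einner M T (lincomb c x 0 x) (lincomb c x 0 x) = c\<^sup>2 * einner M T x x"
    using einner_lincomb_left[OF assms assms L2_proc_lincomb[OF assms assms], of c 0]
      einner_lincomb_right[OF assms assms assms, of c 0]
    by (simp add: power2_eq_square)
  thus ?thesis unfolding enorm_def by (simp add: real_sqrt_mult)
qed

lemma enorm_sum_le:
  assumes "finite A" "\<And>j. j \<in> A \<Longrightarrow> L2_proc M T (x j)"
  shows "enorm (\<lambda>t \<omega>. \<Sum>j\<in>A. x j t \<omega>) \<le> (\<Sum>j\<in>A. enorm (x j))"
  using assms
proof (induction A rule: finite_induct)
  case empty
  show ?case by (simp add: enorm_def einner_def l2inner_def)
next
  case (insert j A)
  have "L2_proc M T (\<lambda>t \<omega>. \<Sum>j\<in>A. x j t \<omega>)"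
    using lincomb_closed_sum_divide[OF lincomb_closed_L2_proc, of A x 1] insert by simp
  hence "enorm (lincomb 1 (x j) 1 (\<lambda>t \<omega>. \<Sum>j\<in>A. x j t \<omega>)) \<le> enorm (x j) + (\<Sum>j\<in>A. enorm (x j))"
    using enorm_add_le[of "x j"] insert by fastforce
  thus ?case using insert by (simp add: lincomb_def)
qed

lemma enorm_sum_divide_le:
  assumes "finite A" "\<And>j. j \<in> A \<Longrightarrow> L2_proc M T (x j)" "\<And>j. j \<in> A \<Longrightarrow> enorm (x j) \<le> B"
    and "real (card A) \<le> c" "0 \<le> B"
  shows "enorm (\<lambda>t \<omega>. (\<Sum>j\<in>A. x j t \<omega>) / c) \<le> B"
proof (cases "A = {}")
  case True
  thus ?thesis using assms(5) by (simp add: enorm_def einner_def l2inner_def)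
next
  case False
  hence c: "c > 0" using assms(1,4) by (meson card_gt_0_iff of_nat_0_less_iff order_less_le_trans)
  have "L2_proc M T (\<lambda>t \<omega>. \<Sum>j\<in>A. x j t \<omega>)"
    using lincomb_closed_sum_divide[OF lincomb_closed_L2_proc, of A x 1] assms(1,2) by simp
  hence "enorm (\<lambda>t \<omega>. (\<Sum>j\<in>A. x j t \<omega>) / c) = enorm (\<lambda>t \<omega>. \<Sum>j\<in>A. x j t \<omega>) / c"
    using enorm_scale[of "\<lambda>t \<omega>. \<Sum>j\<in>A. x j t \<omega>" "1 / c"] c by (simp add: lincomb_def)
  also have "\<dots> \<le> (\<Sum>j\<in>A. enorm (x j)) / c"
    using enorm_sum_le[OF assms(1,2)] c by (simp add: divide_right_mono)
  also have "\<dots> \<le> card A * B / c"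
    using sum_bounded_above[of A "\<lambda>j. enorm (x j)" B] assms(3) c by (simp add: divide_right_mono)
  also have "\<dots> \<le> B"
    using assms(4,5) c by (simp add: field_simps mult_left_mono)
  finally show ?thesis .
qed

lemma linear_form_sum_divide:
  assumes lin: "\<And>x y a b. L2_proc M T x \<Longrightarrow> L2_proc M T y \<Longrightarrow> L (lincomb a x b y) = a * L x + b * L y"
    and "finite A" "\<And>j. j \<in> A \<Longrightarrow> L2_proc M T (x j)"
  shows "L (\<lambda>t \<omega>. (\<Sum>j\<in>A. x j t \<omega>) / c) = (\<Sum>j\<in>A. L (x j)) / c"
proof -
  have L2_sum: "L2_proc M T (\<lambda>t \<omega>. \<Sum>j\<in>B. x j t \<omega>)" if "B \<subseteq> A" for B
    using lincomb_closed_sum_divide[OF lincomb_closed_L2_proc, of B x 1] assms(2,3) that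
    by (simp add: rev_finite_subset subset_iff)
  have "L (\<lambda>t \<omega>. \<Sum>j\<in>A. x j t \<omega>) = (\<Sum>j\<in>A. L (x j))"
    using assms(2,3) L2_sum
  proof (induction A rule: finite_induct)
    case empty
    have "L (\<lambda>t \<omega>. 0) = L (lincomb 1 (\<lambda>t \<omega>. 0) 1 (\<lambda>t \<omega>. 0))" by (simp add: lincomb_def)
    also have "\<dots> = 2 * L (\<lambda>t \<omega>. 0)" using lin[OF L2_proc_zero L2_proc_zero, of 1 1] by simp
    finally show ?case by simp
  next
    case (insert j A)
    have "L (lincomb 1 (x j) 1 (\<lambda>t \<omega>. \<Sum>j\<in>A. x j t \<omega>)) = L (x j) + L (\<lambda>t \<omega>. \<Sum>j\<in>A. x j t \<omega>)"
      using lin[of "x j" "\<lambda>t \<omega>. \<Sum>j\<in>A. x j t \<omega>" 1 1] insert.prems by (simp add: subset_insertI)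
    thus ?case using insert by (simp add: lincomb_def subset_insertI2)
  qed
  moreover have "L (lincomb (1 / c) (\<lambda>t \<omega>. \<Sum>j\<in>A. x j t \<omega>) 0 (\<lambda>t \<omega>. \<Sum>j\<in>A. x j t \<omega>))
      = L (\<lambda>t \<omega>. \<Sum>j\<in>A. x j t \<omega>) / c"
    using lin L2_sum[OF order_refl] by simp
  ultimately show ?thesis by (simp add: lincomb_def)
qed

end

lemma zero_admissible: "(\<lambda>t \<omega>. 0) \<in> admissible_controls M T F"
  unfolding admissible_controls_def prog_meas_def sqnorm2T_def by simp

context finite_horizon
begin

text \<open>Progressive measurability only controls \<open>u\<close> on \<open>[0,T]\<close>; composing with the clamp
  \<open>s \<mapsto> max 0 (min T s)\<close> gives a jointly measurable process on \<open>\<real> \<times> \<Omega>\<close> that agrees with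
  \<open>u\<close> on the horizon.\<close>

lemma admissible_controls_measurable:
  assumes "usual_filtration M T F" "u \<in> admissible_controls M T F"
  shows "(\<lambda>(s,\<omega>). zero_outside_proc T u s \<omega>) \<in> borel_measurable (lborel \<Otimes>\<^sub>M M)"
proof -
  have "space (F T) = space M" "sets (F T) \<subseteq> sets M"
    using assms(1) T_nonneg unfolding usual_filtration_def by auto
  hence "(\<lambda>x. x) \<in> measurable M (F T)"
    by (auto intro!: measurableI)
  hence "(\<lambda>x. x) \<in> measurable (restrict_space borel {0..T} \<Otimes>\<^sub>M M) (restrict_space borel {0..T} \<Otimes>\<^sub>M F T)"
    unfolding measurable_pair_iff using measurable_compose[OF measurable_snd] by (simp add: comp_def)
  moreover have "(\<lambda>(s,\<omega>). u s \<omega>) \<in> borel_measurable (restrict_space borel {0..T} \<Otimes>\<^sub>M F T)"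
    using assms(2) T_nonneg unfolding admissible_controls_def prog_meas_def by auto
  ultimately have u_meas: "(\<lambda>(s,\<omega>). u s \<omega>) \<in> borel_measurable (restrict_space borel {0..T} \<Otimes>\<^sub>M M)"
    by (rule measurable_compose)
  define clamp where "clamp = (\<lambda>s::real. max 0 (min T s))"
  have "clamp \<in> measurable borel (restrict_space borel {0..T})"
    unfolding measurable_restrict_space2_iff clamp_def using T_nonneg by auto
  hence "(\<lambda>(s,\<omega>). (clamp s, \<omega>)) \<in> measurable (borel \<Otimes>\<^sub>M M) (restrict_space borel {0..T} \<Otimes>\<^sub>M M)"
    by measurable
  from measurable_compose[OF this u_meas]
  have [measurable]: "(\<lambda>(s,\<omega>). u (clamp s) \<omega>) \<in> borel_measurable (borel \<Otimes>\<^sub>M M)"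
    by (simp add: case_prod_beta)
  have "(\<lambda>(s,\<omega>). indicator {0..T} s * u (clamp s) \<omega>) \<in> borel_measurable (borel \<Otimes>\<^sub>M M)"
    by measurable
  moreover have "(\<lambda>(s,\<omega>). indicator {0..T} s * u (clamp s) \<omega>) = (\<lambda>(s,\<omega>). zero_outside_proc T u s \<omega>)"
    by (auto simp: zero_outside_proc_def clamp_def fun_eq_iff split: split_indicator)
  ultimately show ?thesis
    by (simp add: measurable_cong_sets[OF sets_pair_measure_cong[OF sets_lborel refl] refl])
qed

lemma L2_proc_if_admissible:
  assumes "usual_filtration M T F" "u \<in> admissible_controls M T F"
  shows "L2_proc M T u"
proof -
  have meas: "(\<lambda>(s,\<omega>). zero_outside_proc T u s \<omega>) \<in> borel_measurable (lborel \<Otimes>\<^sub>M M)"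
    by (rule admissible_controls_measurable[OF assms])
  have "integrable (lborel \<Otimes>\<^sub>M M) (\<lambda>p. (case_prod (zero_outside_proc T u) p)\<^sup>2)"
  proof (rule integrableI_nonneg)
    show "(\<lambda>p. (case_prod (zero_outside_proc T u) p)\<^sup>2) \<in> borel_measurable (lborel \<Otimes>\<^sub>M M)"
      using meas by measurable
    show "(\<integral>\<^sup>+ p. ennreal ((case_prod (zero_outside_proc T u) p)\<^sup>2) \<partial>(lborel \<Otimes>\<^sub>M M)) < \<infinity>"
      using assms(2) unfolding sqnorm2T_eq_nn_integral[OF meas, symmetric] admissible_controls_def
      by simp
  qed simp
  with meas show ?thesis unfolding L2_proc_def by (simp add: case_prod_beta')
qed

lemma admissible_lincomb:
  assumes "usual_filtration M T F" "x \<in> admissible_controls M T F" "y \<in> admissible_controls M T F"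
  shows "lincomb a x b y \<in> admissible_controls M T F"
proof -
  have "L2_proc M T (lincomb a x b y)"
    using L2_proc_lincomb L2_proc_if_admissible assms by blast
  hence "sqnorm2T M T (lincomb a x b y) < \<infinity>"
    by (simp add: sqnorm2T_eq_einner)
  moreover have "prog_meas T F (lincomb a x b y)"
    unfolding prog_meas_def lincomb_def
  proof
    fix t assume "t \<in> {0..T}"
    hence [measurable]: "(\<lambda>(s,\<omega>). x s \<omega>) \<in> borel_measurable (restrict_space borel {0..t} \<Otimes>\<^sub>M F t)"
      "(\<lambda>(s,\<omega>). y s \<omega>) \<in> borel_measurable (restrict_space borel {0..t} \<Otimes>\<^sub>M F t)"
      using assms(2,3) unfolding admissible_controls_def prog_meas_def by auto
    show "(\<lambda>(s,\<omega>). a * x s \<omega> + b * y s \<omega>) \<in> borel_measurable (restrict_space borel {0..t} \<Otimes>\<^sub>M F t)"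
      by measurable
  qed
  ultimately show ?thesis unfolding admissible_controls_def by simp
qed

lemma lincomb_closed_admissible_controls:
  "usual_filtration M T F \<Longrightarrow> lincomb_closed (admissible_controls M T F)"
  unfolding lincomb_closed_def using zero_admissible admissible_lincomb by blast

section \<open>The objective as a combination of expected bilinear forms\<close>

lemma l2inner_path_kop_add_measurable:
  assumes "L2_proc M T u" "L2_proc M T w" "kernel_row_bound T G K" "kernel_row_bound T G' K'"
  shows "(\<lambda>\<omega>. l2inner T (\<lambda>t. u t \<omega>) (\<lambda>t. kop T G (\<lambda>t. w t \<omega>) t + kop T G' (\<lambda>t. w t \<omega>) t))
      \<in> borel_measurable M"
proof -
  have [measurable]: "(\<lambda>(s,\<omega>). zero_outside_proc T u s \<omega>) \<in> borel_measurable (lborel \<Otimes>\<^sub>M M)"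
    "(\<lambda>(s,\<omega>). zero_outside_proc T w s \<omega>) \<in> borel_measurable (lborel \<Otimes>\<^sub>M M)"
    "(\<lambda>(t,s). G t s) \<in> borel_measurable (lborel \<Otimes>\<^sub>M lborel)"
    "(\<lambda>(t,s). G' t s) \<in> borel_measurable (lborel \<Otimes>\<^sub>M lborel)"
    using L2_proc_measurable assms kernel_row_bound_measurable_lborel by auto
  have "(\<lambda>\<omega>. \<integral>s. zero_outside_proc T u s \<omega> * (indicator {0..T} s *
      ((\<integral>r. G s r * zero_outside_proc T w r \<omega> \<partial>lborel) + (\<integral>r. G' s r * zero_outside_proc T w r \<omega> \<partial>lborel)))
      \<partial>lborel) \<in> borel_measurable M"
    by measurable
  thus ?thesis
    by (simp add: l2inner_eq_integral kop_eq_integral zero_outside_path zero_outside_def)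
qed

lemma Jobj_eq:
  assumes u: "L2_proc M T u" and m: "L2_proc M T m" and bi: "L2_proc M T bi" and b0: "L2_proc M T b0"
    and ci: "integrable M ci"
    and A1: "kernel_row_bound T A1 K1" and A2h: "kernel_row_bound T A2h K2"
    and A3: "kernel_row_bound T A3 K3" and A3_adj: "kernel_row_bound T (adj_kernel A3) K4"
  shows "Jobj M T A1 lam A2h A3 b0 bi ci u m =
     - einner_kop M T A1 m m - (lam * einner M T u u + einner_kop M T A2h u u)
     - (einner_kop M T A3 u m + einner_kop M T (adj_kernel A3) u m)
     + einner M T bi u + einner M T b0 m + (\<integral>\<omega>. ci \<omega> \<partial>M)"
proof -
  let ?f1 = "\<lambda>\<omega>. l2inner T (\<lambda>t. m t \<omega>) (kop T A1 (\<lambda>t. m t \<omega>))"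
  let ?f2 = "\<lambda>\<omega>. l2inner T (\<lambda>t. u t \<omega>) (\<lambda>t. u t \<omega>)"
  let ?f3 = "\<lambda>\<omega>. l2inner T (\<lambda>t. u t \<omega>) (kop T A2h (\<lambda>t. u t \<omega>))"
  let ?f4 = "\<lambda>\<omega>. l2inner T (\<lambda>t. u t \<omega>) (kop T A3 (\<lambda>t. m t \<omega>))"
  let ?f5 = "\<lambda>\<omega>. l2inner T (\<lambda>t. u t \<omega>) (kop T (adj_kernel A3) (\<lambda>t. m t \<omega>))"
  let ?f6 = "\<lambda>\<omega>. l2inner T (\<lambda>t. bi t \<omega>) (\<lambda>t. u t \<omega>)"
  let ?f7 = "\<lambda>\<omega>. l2inner T (\<lambda>t. b0 t \<omega>) (\<lambda>t. m t \<omega>)"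
  let ?f45 = "\<lambda>\<omega>. l2inner T (\<lambda>t. u t \<omega>)
      (\<lambda>t. kop T A3 (\<lambda>t. m t \<omega>) t + kop T (adj_kernel A3) (\<lambda>t. m t \<omega>) t)"
  have int: "integrable M ?f1" "integrable M ?f2" "integrable M ?f3" "integrable M ?f4"
    "integrable M ?f5" "integrable M ?f6" "integrable M ?f7"
    using integrable_l2inner_path_kop[OF m m A1] integrable_l2inner_path[OF u u]
      integrable_l2inner_path_kop[OF u u A2h] integrable_l2inner_path_kop[OF u m A3]
      integrable_l2inner_path_kop[OF u m A3_adj] integrable_l2inner_path[OF bi u]
      integrable_l2inner_path[OF b0 m] by auto
  have [measurable]: "?f1 \<in> borel_measurable M" "?f2 \<in> borel_measurable M" "?f3 \<in> borel_measurable M"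
    "?f4 \<in> borel_measurable M" "?f5 \<in> borel_measurable M" "?f6 \<in> borel_measurable M"
    "?f7 \<in> borel_measurable M" "ci \<in> borel_measurable M" "?f45 \<in> borel_measurable M"
    using int ci l2inner_path_kop_add_measurable[OF u m A3 A3_adj] by auto
  have "Jobj M T A1 lam A2h A3 b0 bi ci u m =
      (\<integral>\<omega>. - ?f1 \<omega> - (lam * ?f2 \<omega> + ?f3 \<omega>) - (?f4 \<omega> + ?f5 \<omega>) + ?f6 \<omega> + ?f7 \<omega> + ci \<omega> \<partial>M)"
    unfolding Jobj_def Let_def
  proof (rule integral_cong_AE)
    show "AE \<omega> in M. - ?f1 \<omega> - (lam * ?f2 \<omega> + ?f3 \<omega>) - ?f45 \<omega> + ?f6 \<omega> + ?f7 \<omega> + ci \<omega> =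
        - ?f1 \<omega> - (lam * ?f2 \<omega> + ?f3 \<omega>) - (?f4 \<omega> + ?f5 \<omega>) + ?f6 \<omega> + ?f7 \<omega> + ci \<omega>"
      using AE_L2_on_path[OF u] AE_L2_on_path[OF m]
    proof eventually_elim
      case (elim \<omega>)
      have "?f45 \<omega> = ?f4 \<omega> + ?f5 \<omega>"
        using l2inner_lincomb_right[OF L2_on_kop[OF A3 elim(2) T_nonneg]
            L2_on_kop[OF A3_adj elim(2) T_nonneg] elim(1), of 1 1] by simp
      thus ?case by simp
    qed
  qed (measurable, measurable)
  also have "\<dots> = - einner_kop M T A1 m m - (lam * einner M T u u + einner_kop M T A2h u u)
      - (einner_kop M T A3 u m + einner_kop M T (adj_kernel A3) u m)
      + einner M T bi u + einner M T b0 m + (\<integral>\<omega>. ci \<omega> \<partial>M)"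
    unfolding einner_def einner_kop_def using int ci by simp
  finally show ?thesis .
qed

end

section \<open>First order conditions of the mean-field equilibrium\<close>

definition empirical_mean :: "nat \<Rightarrow> (nat \<Rightarrow> real \<Rightarrow> 'a \<Rightarrow> real) \<Rightarrow> real \<Rightarrow> 'a \<Rightarrow> real" where
  "empirical_mean N x = (\<lambda>t \<omega>. (\<Sum>j\<in>{1..N}. x j t \<omega>) / real N)"

definition kop_bound :: "real \<Rightarrow> (real \<Rightarrow> real \<Rightarrow> real) \<Rightarrow> real" where
  "kop_bound T G = sqrt (T * row_bound T G)"

lemma (in finite_horizon) abs_einner_kop_le_mult:
  assumes "L2_proc M T x" "L2_proc M T y" "kernel_row_bound T G (row_bound T G)"
    and "enorm x \<le> p" "enorm y \<le> q"
  shows "\<bar>einner_kop M T G x y\<bar> \<le> kop_bound T G * p * q"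
proof -
  have "\<bar>einner_kop M T G x y\<bar> \<le> kop_bound T G * enorm x * enorm y"
    using abs_einner_kop_le[OF assms(1-3)] by (simp add: kop_bound_def)
  also have "\<dots> \<le> kop_bound T G * p * q"
    using assms(4,5) enorm_nonneg[of x] enorm_nonneg[of y] kernel_row_bound_nonneg[OF assms(3)] T_nonneg
    by (intro mult_mono) (auto simp: kop_bound_def)
  finally show ?thesis .
qed

locale mfg_equilibrium = finite_horizon M T for M :: "'a measure" and T :: real +
  fixes F :: "real \<Rightarrow> 'a measure" and A1 A2h A3 :: "real \<Rightarrow> real \<Rightarrow> real" and lam :: real
    and b :: "nat \<Rightarrow> real \<Rightarrow> 'a \<Rightarrow> real" and c :: "nat \<Rightarrow> 'a \<Rightarrow> real"
    and binf nu :: "real \<Rightarrow> 'a \<Rightarrow> real" and v :: "nat \<Rightarrow> real \<Rightarrow> 'a \<Rightarrow> real"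
    and h :: "real \<Rightarrow> real"
  assumes filtration: "usual_filtration M T F"
    and A1: "admissible_kernel T A1" and A2h: "admissible_kernel T A2h" and A3: "admissible_kernel T A3"
    and lam_pos: "lam > 0"
    and b_admissible: "\<And>i. b i \<in> admissible_controls M T F"
    and c_integrable: "\<And>i. i \<ge> 1 \<Longrightarrow> integrable M (c i)"
    and binf_admissible: "binf \<in> admissible_controls M T F"
    and h_nonneg: "\<forall>x\<ge>0. h x \<ge> 0"
    and h_tendsto: "(h \<longlongrightarrow> 0) at_top"
    and b_mean_error: "\<And>N t. N \<ge> 1 \<Longrightarrow> t \<in> {0..T} \<Longrightarrow>
      (\<integral>\<^sup>+ \<omega>. ennreal (((\<Sum>i\<in>{1..N}. b i t \<omega>) / real N - binf t \<omega>)\<^sup>2) \<partial>M) \<le> ennreal (h (real N))"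
    and nash: "mfg_nash M T F A1 lam A2h A3 b c nu v"
begin

abbreviation adm :: "(real \<Rightarrow> 'a \<Rightarrow> real) set" where
  "adm \<equiv> admissible_controls M T F"

lemma L2_proc_adm: "u \<in> adm \<Longrightarrow> L2_proc M T u"
  by (rule L2_proc_if_admissible[OF filtration])

lemma adm_lincomb: "x \<in> adm \<Longrightarrow> y \<in> adm \<Longrightarrow> lincomb a x a' y \<in> adm"
  by (rule admissible_lincomb[OF filtration])

lemma adm_empirical_mean: "(\<And>j. j \<in> {1..N} \<Longrightarrow> x j \<in> adm) \<Longrightarrow> empirical_mean N x \<in> adm"
  unfolding empirical_mean_def
  by (rule lincomb_closed_sum_divide[OF lincomb_closed_admissible_controls[OF filtration]]) auto

lemma nu_adm: "nu \<in> adm"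
  and v_adm: "i \<ge> 1 \<Longrightarrow> v i \<in> adm"
  and best_response: "i \<ge> 1 \<Longrightarrow> w \<in> adm \<Longrightarrow>
    Jinf M T A1 lam A2h A3 b c i w nu \<le> Jinf M T A1 lam A2h A3 b c i (v i) nu"
  using nash unfolding mfg_nash_def by auto

lemma A1_bound: "kernel_row_bound T A1 (row_bound T A1)"
  and A2h_bound: "kernel_row_bound T A2h (row_bound T A2h)"
  and A3_bound: "kernel_row_bound T A3 (row_bound T A3)"
  and A3_adj_bound: "kernel_row_bound T (adj_kernel A3) (row_bound T (adj_kernel A3))"
  using admissible_kernel_row_bound A1 A2h A3 admissible_kernel_adj_row_bound by blast+

definition coupling :: "(real \<Rightarrow> 'a \<Rightarrow> real) \<Rightarrow> (real \<Rightarrow> 'a \<Rightarrow> real) \<Rightarrow> real" where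
  "coupling x y = einner_kop M T A3 x y + einner_kop M T (adj_kernel A3) x y"

text \<open>\<open>deriv_form x y z - coupling z nu\<close> is the derivative of \<open>Jinf\<close> at the control \<open>x\<close>,
  for a player with private signal \<open>y\<close>, in the direction \<open>z\<close>.\<close>

definition deriv_form :: "(real \<Rightarrow> 'a \<Rightarrow> real) \<Rightarrow> (real \<Rightarrow> 'a \<Rightarrow> real) \<Rightarrow> (real \<Rightarrow> 'a \<Rightarrow> real) \<Rightarrow> real" where
  "deriv_form x y z =
     - 2 * lam * einner M T x z - einner_kop M T A2h x z - einner_kop M T A2h z x + einner M T y z"

lemmas einner_kop_A2h_lincomb =
  einner_kop_lincomb_left[OF _ _ _ A2h_bound] einner_kop_lincomb_right[OF _ _ _ A2h_bound]

lemma coupling_lincomb_left: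
  "L2_proc M T x \<Longrightarrow> L2_proc M T x' \<Longrightarrow> L2_proc M T y \<Longrightarrow>
    coupling (lincomb a x a' x') y = a * coupling x y + a' * coupling x' y"
  unfolding coupling_def
  by (simp add: einner_kop_lincomb_left[OF _ _ _ A3_bound] einner_kop_lincomb_left[OF _ _ _ A3_adj_bound]
      algebra_simps)

lemma coupling_lincomb_right:
  "L2_proc M T y \<Longrightarrow> L2_proc M T y' \<Longrightarrow> L2_proc M T x \<Longrightarrow>
    coupling x (lincomb a y a' y') = a * coupling x y + a' * coupling x y'"
  unfolding coupling_def
  by (simp add: einner_kop_lincomb_right[OF _ _ _ A3_bound] einner_kop_lincomb_right[OF _ _ _ A3_adj_bound]
      algebra_simps)

definition coupling_bound :: real where
  "coupling_bound = kop_bound T A3 + kop_bound T (adj_kernel A3)"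

lemma abs_coupling_le_mult:
  assumes "L2_proc M T x" "L2_proc M T y" "enorm x \<le> p" "enorm y \<le> q"
  shows "\<bar>coupling x y\<bar> \<le> coupling_bound * p * q"
  using abs_einner_kop_le_mult[OF assms(1,2) A3_bound assms(3,4)]
    abs_einner_kop_le_mult[OF assms(1,2) A3_adj_bound assms(3,4)]
  unfolding coupling_def coupling_bound_def by (simp add: algebra_simps)

lemma Jobj_eq_forms:
  assumes "L2_proc M T u" "L2_proc M T m" "i \<ge> 1"
  shows "Jobj M T A1 lam A2h A3 (b 0) (b i) (c i) u m =
     - einner_kop M T A1 m m - (lam * einner M T u u + einner_kop M T A2h u u) - coupling u m
     + einner M T (b i) u + einner M T (b 0) m + (\<integral>\<omega>. c i \<omega> \<partial>M)"
  unfolding coupling_def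
  by (rule Jobj_eq[OF assms(1,2) L2_proc_adm L2_proc_adm c_integrable[OF assms(3)]
        A1_bound A2h_bound A3_bound A3_adj_bound]) (rule b_admissible)+

lemma Jinf_perturbation:
  assumes j: "j \<ge> 1" and z: "z \<in> adm"
  shows "Jinf M T A1 lam A2h A3 b c j (lincomb 1 (v j) e z) nu - Jinf M T A1 lam A2h A3 b c j (v j) nu
    = e * (deriv_form (v j) (b j) z - coupling z nu)
      - e\<^sup>2 * (lam * einner M T z z + einner_kop M T A2h z z)"
proof -
  have v: "L2_proc M T (v j)" and z': "L2_proc M T z" and nu: "L2_proc M T nu" and bj: "L2_proc M T (b j)"
    using L2_proc_adm v_adm[OF j] z nu_adm b_admissible by blast+
  have w: "L2_proc M T (lincomb 1 (v j) e z)" by (rule L2_proc_lincomb[OF v z'])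
  note lin = einner_lincomb_left[OF v z'] einner_lincomb_right[OF v z']
    einner_kop_lincomb_left[OF v z' _ A2h_bound] einner_kop_lincomb_right[OF v z' _ A2h_bound]
  show ?thesis
    unfolding Jinf_def Jobj_eq_forms[OF w nu j] Jobj_eq_forms[OF v nu j] deriv_form_def
    using lin[OF w] lin[OF v] lin[OF z'] lin[OF bj] coupling_lincomb_left[OF v z' nu, of 1 e]
      einner_commute[of z "v j"]
    by (simp add: algebra_simps power2_eq_square)
qed

text \<open>The expansion above is a concave quadratic in \<open>e\<close> that is maximal at \<open>e = 0\<close>, so its
  linear coefficient vanishes.\<close>

lemma first_order_condition:
  assumes "j \<ge> 1" "z \<in> adm"
  shows "deriv_form (v j) (b j) z = coupling z nu"
proof -
  have "deriv_form (v j) (b j) z - coupling z nu = 0"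
  proof (rule linear_coeff_eq_0_if_quadratic_nonpos)
    fix e :: real
    have "lincomb 1 (v j) e z \<in> adm" by (rule adm_lincomb[OF v_adm[OF assms(1)] assms(2)])
    from best_response[OF assms(1) this] Jinf_perturbation[OF assms, of e]
    show "e * (deriv_form (v j) (b j) z - coupling z nu)
        + e\<^sup>2 * - (lam * einner M T z z + einner_kop M T A2h z z) \<le> 0"
      by (simp add: algebra_simps)
  qed
  thus ?thesis by simp
qed

lemma deriv_form_empirical_mean:
  assumes N: "N \<ge> 1" and z: "z \<in> adm"
  shows "deriv_form (empirical_mean N v) (empirical_mean N b) z = coupling z nu"
proof -
  have z': "L2_proc M T z" using L2_proc_adm[OF z] .
  have v: "\<And>j. j \<in> {1..N} \<Longrightarrow> L2_proc M T (v j)" and b: "\<And>j. j \<in> {1..N} \<Longrightarrow> L2_proc M T (b j)"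
    using L2_proc_adm v_adm b_admissible by auto
  have "einner M T (empirical_mean N v) z = (\<Sum>j\<in>{1..N}. einner M T (v j) z) / real N"
    "einner_kop M T A2h (empirical_mean N v) z = (\<Sum>j\<in>{1..N}. einner_kop M T A2h (v j) z) / real N"
    "einner_kop M T A2h z (empirical_mean N v) = (\<Sum>j\<in>{1..N}. einner_kop M T A2h z (v j)) / real N"
    "einner M T (empirical_mean N b) z = (\<Sum>j\<in>{1..N}. einner M T (b j) z) / real N"
    unfolding empirical_mean_def
    by (intro linear_form_sum_divide v b finite_atLeastAtMost;
        simp add: einner_lincomb_left einner_kop_A2h_lincomb z')+
  hence "deriv_form (empirical_mean N v) (empirical_mean N b) z
      = (\<Sum>j\<in>{1..N}. deriv_form (v j) (b j) z) / real N"
    unfolding deriv_form_def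
    by (simp add: sum_subtractf sum.distrib sum_distrib_left diff_divide_distrib add_divide_distrib)
  also have "\<dots> = coupling z nu"
    using first_order_condition[OF _ z] N by simp
  finally show ?thesis .
qed

lemma deriv_form_diff:
  assumes "L2_proc M T x" "L2_proc M T x'" "L2_proc M T y" "L2_proc M T y'" "L2_proc M T z"
  shows "deriv_form (lincomb 1 x (-1) x') (lincomb 1 y (-1) y') z = deriv_form x y z - deriv_form x' y' z"
  unfolding deriv_form_def
  using assms by (simp add: einner_lincomb_left einner_kop_A2h_lincomb algebra_simps)

lemma abs_deriv_form_le:
  assumes "L2_proc M T x" "L2_proc M T y" "L2_proc M T z"
  shows "\<bar>deriv_form x y z\<bar> \<le> ((2 * lam + 2 * kop_bound T A2h) * enorm x + enorm y) * enorm z"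
proof -
  have "\<bar>deriv_form x y z\<bar> \<le> 2 * lam * \<bar>einner M T x z\<bar> + \<bar>einner_kop M T A2h x z\<bar>
      + \<bar>einner_kop M T A2h z x\<bar> + \<bar>einner M T y z\<bar>"
  proof -
    have "\<bar>- p - q - r + s\<bar> \<le> \<bar>p\<bar> + \<bar>q\<bar> + \<bar>r\<bar> + \<bar>s\<bar>" for p q r s :: real
      by arith
    thus ?thesis unfolding deriv_form_def
      using lam_pos abs_mult[of "2 * lam" "einner M T x z"] by simp
  qed
  also have "\<dots> \<le> 2 * lam * (enorm x * enorm z) + kop_bound T A2h * enorm x * enorm z
      + kop_bound T A2h * enorm z * enorm x + enorm y * enorm z"
    using abs_einner_le[OF assms(1,3)] abs_einner_le[OF assms(2,3)] lam_pos
      abs_einner_kop_le_mult[OF assms(1,3) A2h_bound order_refl order_refl]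
      abs_einner_kop_le_mult[OF assms(3,1) A2h_bound order_refl order_refl]
    by (intro add_mono) auto
  finally show ?thesis by (simp add: algebra_simps)
qed

definition mean_dev :: "nat \<Rightarrow> real \<Rightarrow> 'a \<Rightarrow> real" where
  "mean_dev N = lincomb 1 (empirical_mean N v) (-1) nu"

definition signal_dev :: "nat \<Rightarrow> real \<Rightarrow> 'a \<Rightarrow> real" where
  "signal_dev N = lincomb 1 (empirical_mean N b) (-1) binf"

lemma mean_dev_adm: "mean_dev N \<in> adm"
  unfolding mean_dev_def by (intro adm_lincomb adm_empirical_mean v_adm nu_adm) auto

lemma signal_dev_adm: "signal_dev N \<in> adm"
  unfolding signal_dev_def by (intro adm_lincomb adm_empirical_mean b_admissible binf_admissible)

lemma enorm_signal_dev_le: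
  assumes "N \<ge> 1"
  shows "enorm (signal_dev N) \<le> sqrt (h (real N) * T)"
proof -
  have h: "h (real N) \<ge> 0" using h_nonneg by simp
  have "sqnorm2T M T (signal_dev N) \<le> ennreal (h (real N)) * ennreal T"
    using b_mean_error[OF assms]
    by (intro sqnorm2T_le_const) (simp add: signal_dev_def lincomb_def empirical_mean_def)
  hence "ennreal (einner M T (signal_dev N) (signal_dev N)) \<le> ennreal (h (real N) * T)"
    using sqnorm2T_eq_einner[OF L2_proc_adm[OF signal_dev_adm]] h T_nonneg by (simp add: ennreal_mult)
  hence "einner M T (signal_dev N) (signal_dev N) \<le> h (real N) * T"
    using h T_nonneg by (simp add: ennreal_le_iff)
  thus ?thesis unfolding enorm_def by simp
qed

lemma enorm_signal_dev_tendsto: "(\<lambda>N. enorm (signal_dev N)) \<longlonglongrightarrow> 0"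
proof (rule tendsto_sandwich)
  show "eventually (\<lambda>N. 0 \<le> enorm (signal_dev N)) sequentially" by (simp add: enorm_nonneg)
  show "eventually (\<lambda>N. enorm (signal_dev N) \<le> sqrt (h (real N) * T)) sequentially"
    using enorm_signal_dev_le eventually_sequentially by blast
  have "(\<lambda>N. h (real N)) \<longlonglongrightarrow> 0"
    using filterlim_compose[OF h_tendsto filterlim_real_sequentially] by simp
  thus "(\<lambda>N. sqrt (h (real N) * T)) \<longlonglongrightarrow> 0"
    using tendsto_real_sqrt[OF tendsto_mult_right_zero, of "\<lambda>N. h (real N)" sequentially T]
    by (simp add: mult.commute)
qed simp

lemma enorm_mean_dev_tendsto: "(\<lambda>N. enorm (mean_dev N)) \<longlonglongrightarrow> 0"
proof -
  define S where "S N = (SUP t\<in>{0..T}. \<integral>\<^sup>+ \<omega>. ennreal (((\<Sum>j\<in>{1..N}. v j t \<omega>) / real N - nu t \<omega>)\<^sup>2) \<partial>M)"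
    for N
  have "S \<longlonglongrightarrow> 0" using nash unfolding mfg_nash_def S_def by simp
  hence lim: "(\<lambda>N. ennreal T * S N) \<longlonglongrightarrow> 0"
    using ennreal_tendsto_cmult[of "ennreal T" S 0] by simp
  have le:  "ennreal (einner M T (mean_dev N) (mean_dev N)) \<le> ennreal T * S N" for N
  proof -
    have "sqnorm2T M T (mean_dev N) \<le> S N * ennreal T"
      unfolding S_def
      by (rule sqnorm2T_le_const) (auto simp: mean_dev_def lincomb_def empirical_mean_def intro: SUP_upper)
    thus ?thesis
      using sqnorm2T_eq_einner[OF L2_proc_adm[OF mean_dev_adm]] by (simp add: mult.commute)
  qed
  have "(\<lambda>N. ennreal (einner M T (mean_dev N) (mean_dev N))) \<longlonglongrightarrow> 0"
    by (rule tendsto_sandwich[OF _ _ tendsto_const lim]) (simp_all add: le)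
  hence "(\<lambda>N. einner M T (mean_dev N) (mean_dev N)) \<longlonglongrightarrow> 0"
    using tendsto_ennreal_iff[of "\<lambda>N. einner M T (mean_dev N) (mean_dev N)" sequentially 0]
      einner_self_nonneg by simp
  from tendsto_real_sqrt[OF this] show ?thesis unfolding enorm_def by simp
qed

end

lemma (in finite_horizon) enorm_le_sqrt_SUP_sqnorm2T:
  assumes "u \<in> U" "L2_proc M T u" "(SUP u\<in>U. sqnorm2T M T u) < \<infinity>"
  shows "enorm u \<le> sqrt (enn2real (SUP u\<in>U. sqnorm2T M T u))"
proof -
  have "einner M T u u = enn2real (sqnorm2T M T u)"
    using sqnorm2T_eq_einner[OF assms(2)] einner_self_nonneg by simp
  also have "\<dots> \<le> enn2real (SUP u\<in>U. sqnorm2T M T u)"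
    using assms(1,3) by (intro enn2real_mono SUP_upper) (simp_all add: infinity_ennreal_def)
  finally show ?thesis unfolding enorm_def by simp
qed

context mfg_equilibrium
begin

lemma L2_proc_empirical_mean_v: "L2_proc M T (empirical_mean N v)"
  and L2_proc_empirical_mean_b: "L2_proc M T (empirical_mean N b)"
  using L2_proc_adm adm_empirical_mean v_adm b_admissible by auto

lemma limit_first_order_condition:
  assumes z: "z \<in> adm"
  shows "deriv_form nu binf z = coupling z nu"
proof -
  have z': "L2_proc M T z" by (rule L2_proc_adm[OF z])
  let ?g = "\<lambda>N. ((2 * lam + 2 * kop_bound T A2h) * enorm (mean_dev N) + enorm (signal_dev N)) * enorm z"
  have "\<bar>deriv_form nu binf z - coupling z nu\<bar> \<le> ?g N" if "N \<ge> 1" for N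
  proof -
    have "deriv_form nu binf z - coupling z nu = - deriv_form (mean_dev N) (signal_dev N) z"
      using deriv_form_diff[OF L2_proc_empirical_mean_v L2_proc_adm[OF nu_adm]
          L2_proc_empirical_mean_b L2_proc_adm[OF binf_admissible] z']
        deriv_form_empirical_mean[OF that z]
      by (simp add: mean_dev_def signal_dev_def)
    thus ?thesis
      using abs_deriv_form_le[OF L2_proc_adm[OF mean_dev_adm] L2_proc_adm[OF signal_dev_adm] z'] by simp
  qed
  moreover have "?g \<longlonglongrightarrow> ((2 * lam + 2 * kop_bound T A2h) * 0 + 0) * enorm z"
    by (intro tendsto_intros enorm_mean_dev_tendsto enorm_signal_dev_tendsto)
  ultimately have "\<bar>deriv_form nu binf z - coupling z nu\<bar> \<le> 0"
    by (intro LIMSEQ_le_const) auto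
  thus ?thesis by simp
qed

lemma enorm_mean_dev_le:
  assumes N: "N \<ge> 1"
  shows "enorm (mean_dev N) \<le> sqrt (h (real N) * T) / (2 * lam)"
proof -
  let ?d = "mean_dev N" and ?e = "signal_dev N"
  have d: "L2_proc M T ?d" and e: "L2_proc M T ?e"
    using L2_proc_adm mean_dev_adm signal_dev_adm by auto
  have "deriv_form ?d ?e ?d = 0"
    using deriv_form_diff[OF L2_proc_empirical_mean_v L2_proc_adm[OF nu_adm]
        L2_proc_empirical_mean_b L2_proc_adm[OF binf_admissible] d]
      deriv_form_empirical_mean[OF N mean_dev_adm] limit_first_order_condition[OF mean_dev_adm]
    by (simp add: mean_dev_def signal_dev_def)
  hence "2 * lam * (enorm ?d * enorm ?d) \<le> einner M T ?e ?d"
    using einner_kop_self_nonneg[OF A2h d]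
    by (simp add: deriv_form_def enorm_power2[symmetric] power2_eq_square)
  also have "\<dots> \<le> enorm ?e * enorm ?d"
    using abs_einner_le[OF e d] by simp
  finally have sq: "(2 * lam * enorm ?d) * enorm ?d \<le> enorm ?e * enorm ?d"
    by (simp add: mult.assoc)
  show ?thesis
  proof (cases "enorm ?d = 0")
    case True
    thus ?thesis using h_nonneg T_nonneg lam_pos by simp
  next
    case False
    hence "enorm ?d > 0" using enorm_nonneg[of ?d] by simp
    hence "2 * lam * enorm ?d \<le> enorm ?e" using sq by simp
    thus ?thesis using enorm_signal_dev_le[OF N] lam_pos by (simp add: pos_le_divide_eq mult.commute)
  qed
qed

section \<open>Deviations in the \<open>N\<close>-player game\<close>

lemma JN_deviation_identity:
  assumes i: "i \<in> {1..N}" and u: "u \<in> adm"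
  defines "\<delta> \<equiv> lincomb (1 / real N) u (- 1 / real N) (v i)"
  shows "JN M T A1 lam A2h A3 b c N i u v - JN M T A1 lam A2h A3 b c N i (v i) v
    = (Jinf M T A1 lam A2h A3 b c i u nu - Jinf M T A1 lam A2h A3 b c i (v i) nu)
      - einner_kop M T A1 (empirical_mean N v) \<delta>
      - einner_kop M T A1 \<delta> (lincomb 1 (empirical_mean N v) 1 \<delta>)
      - coupling u \<delta> - coupling (lincomb 1 u (-1) (v i)) (mean_dev N) + einner M T (b 0) \<delta>"
proof -
  let ?m = "empirical_mean N v"
  have i1: "i \<ge> 1" using i by simp
  have u': "L2_proc M T u" and vi: "L2_proc M T (v i)" and nu: "L2_proc M T nu" and m: "L2_proc M T ?m"
    and b0: "L2_proc M T (b 0)"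
    using L2_proc_adm u v_adm[OF i1] nu_adm L2_proc_empirical_mean_v b_admissible by auto
  have \<delta>: "L2_proc M T \<delta>" unfolding \<delta>_def by (rule L2_proc_lincomb[OF u' vi])
  have sum_split: "(\<Sum>j\<in>{1..N}. v j t \<omega>) = v i t \<omega> + (\<Sum>j\<in>{1..N}-{i}. v j t \<omega>)" for t \<omega>
    using sum.remove[of "{1..N}" i "\<lambda>j. v j t \<omega>"] i by simp
  have mean_u: "(\<lambda>t \<omega>. (u t \<omega> + (\<Sum>j\<in>{1..N}-{i}. v j t \<omega>)) / real N) = lincomb 1 ?m 1 \<delta>"
    unfolding empirical_mean_def \<delta>_def lincomb_def sum_split
    by (simp add: fun_eq_iff add_divide_distrib diff_divide_distrib)
  have mean_v: "(\<lambda>t \<omega>. (v i t \<omega> + (\<Sum>j\<in>{1..N}-{i}. v j t \<omega>)) / real N) = ?m"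
    unfolding empirical_mean_def sum_split ..
  have mu: "L2_proc M T (lincomb 1 ?m 1 \<delta>)" by (rule L2_proc_lincomb[OF m \<delta>])
  have "einner_kop M T A1 (lincomb 1 ?m 1 \<delta>) (lincomb 1 ?m 1 \<delta>)
      = einner_kop M T A1 ?m ?m + einner_kop M T A1 ?m \<delta> + einner_kop M T A1 \<delta> (lincomb 1 ?m 1 \<delta>)"
    using einner_kop_lincomb_left[OF m \<delta> mu A1_bound, of 1 1]
      einner_kop_lincomb_right[OF m \<delta> m A1_bound, of 1 1] by simp
  moreover have "coupling u (lincomb 1 ?m 1 \<delta>) = coupling u ?m + coupling u \<delta>"
    using coupling_lincomb_right[OF m \<delta> u', of 1 1] by simp
  moreover have "einner M T (b 0) (lincomb 1 ?m 1 \<delta>) = einner M T (b 0) ?m + einner M T (b 0) \<delta>"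
    using einner_lincomb_right[OF m \<delta> b0, of 1 1] by simp
  moreover have "coupling (lincomb 1 u (-1) (v i)) (lincomb 1 ?m (-1) nu)
      = coupling u ?m - coupling u nu - coupling (v i) ?m + coupling (v i) nu"
    using coupling_lincomb_left[OF u' vi L2_proc_lincomb[OF m nu], of 1 "-1"]
      coupling_lincomb_right[OF m nu u', of 1 "-1"] coupling_lincomb_right[OF m nu vi, of 1 "-1"]
    by simp
  ultimately show ?thesis
    unfolding JN_def Jinf_def mean_u mean_v Jobj_eq_forms[OF u' mu i1] Jobj_eq_forms[OF vi m i1]
      Jobj_eq_forms[OF u' nu i1] Jobj_eq_forms[OF vi nu i1] mean_dev_def
    by linarith
qed

lemma JN_deviation_gain_le:
  assumes i: "i \<in> {1..N}" and u: "u \<in> adm"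
    and u_le: "enorm u \<le> B" and v_le: "\<And>j. j \<ge> 1 \<Longrightarrow> enorm (v j) \<le> B"
  shows "JN M T A1 lam A2h A3 b c N i u v \<le> JN M T A1 lam A2h A3 b c N i (v i) v
    + (8 * kop_bound T A1 * B\<^sup>2 + 2 * coupling_bound * B\<^sup>2 + 2 * enorm (b 0) * B) / real N
    + coupling_bound * B * sqrt (h (real N) * T) / lam"
proof -
  let ?m = "empirical_mean N v" and ?\<delta> = "lincomb (1 / real N) u (- 1 / real N) (v i)"
  let ?w = "lincomb 1 u (-1) (v i)"
  have i1: "i \<ge> 1" and N: "N \<ge> 1" and rN: "real N \<ge> 1" using i by auto
  have B: "0 \<le> B" using u_le enorm_nonneg[of u] by simp
  have u': "L2_proc M T u" and vi: "L2_proc M T (v i)" and m: "L2_proc M T ?m" and b0: "L2_proc M T (b 0)"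
    and d: "L2_proc M T (mean_dev N)"
    using L2_proc_adm u v_adm[OF i1] L2_proc_empirical_mean_v b_admissible mean_dev_adm by auto
  have \<delta>: "L2_proc M T ?\<delta>" and w: "L2_proc M T ?w" using L2_proc_lincomb[OF u' vi] by auto
  have vi_le: "enorm (v i) \<le> B" by (rule v_le[OF i1])
  have \<delta>_le: "enorm ?\<delta> \<le> 2 * B / real N"
  proof -
    have "?\<delta> = lincomb 1 (lincomb (1 / real N) u 0 u) 1 (lincomb (- 1 / real N) (v i) 0 (v i))"
      by (simp add: lincomb_def)
    hence "enorm ?\<delta> \<le> enorm (lincomb (1 / real N) u 0 u) + enorm (lincomb (- 1 / real N) (v i) 0 (v i))"
      using enorm_add_le[OF L2_proc_lincomb[OF u' u'] L2_proc_lincomb[OF vi vi]] by simp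
    also have "\<dots> = enorm u / real N + enorm (v i) / real N"
      using enorm_scale[OF u', of "1 / real N"] enorm_scale[OF vi, of "- 1 / real N"] by simp
    also have "\<dots> \<le> B / real N + B / real N"
      using u_le vi_le rN by (intro add_mono divide_right_mono) auto
    finally show ?thesis by simp
  qed
  have m_le: "enorm ?m \<le> B"
    unfolding empirical_mean_def
    using enorm_sum_divide_le[of "{1..N}" v B "real N"] v_le B L2_proc_adm v_adm by auto
  have m\<delta>_le: "enorm (lincomb 1 ?m 1 ?\<delta>) \<le> 3 * B"
  proof -
    have "enorm (lincomb 1 ?m 1 ?\<delta>) \<le> B + 2 * B / real N"
      using enorm_add_le[OF m \<delta>] m_le \<delta>_le by simp
    also have "2 * B / real N \<le> 2 * B" using rN B by (simp add: field_simps mult_left_mono)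
    finally show ?thesis by simp
  qed
  have w_le: "enorm ?w \<le> 2 * B"
  proof -
    have "?w = lincomb 1 u 1 (lincomb (-1) (v i) 0 (v i))" by (simp add: lincomb_def)
    hence "enorm ?w \<le> enorm u + enorm (lincomb (-1) (v i) 0 (v i))"
      using enorm_add_le[OF u' L2_proc_lincomb[OF vi vi]] by simp
    also have "\<dots> \<le> 2 * B"
      using enorm_scale[OF vi, of "-1"] u_le vi_le by simp
    finally show ?thesis .
  qed
  have "\<bar>einner_kop M T A1 ?m ?\<delta>\<bar> \<le> kop_bound T A1 * B * (2 * B / real N)"
    by (rule abs_einner_kop_le_mult[OF m \<delta> A1_bound m_le \<delta>_le])
  moreover have "\<bar>einner_kop M T A1 ?\<delta> (lincomb 1 ?m 1 ?\<delta>)\<bar> \<le> kop_bound T A1 * (2 * B / real N) * (3 * B)"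
    by (rule abs_einner_kop_le_mult[OF \<delta> L2_proc_lincomb[OF m \<delta>] A1_bound \<delta>_le m\<delta>_le])
  moreover have "\<bar>coupling u ?\<delta>\<bar> \<le> coupling_bound * B * (2 * B / real N)"
    by (rule abs_coupling_le_mult[OF u' \<delta> u_le \<delta>_le])
  moreover have "\<bar>coupling ?w (mean_dev N)\<bar> \<le> coupling_bound * (2 * B) * (sqrt (h (real N) * T) / (2 * lam))"
    by (rule abs_coupling_le_mult[OF w d w_le enorm_mean_dev_le[OF N]])
  moreover have "\<bar>einner M T (b 0) ?\<delta>\<bar> \<le> enorm (b 0) * (2 * B / real N)"
    using abs_einner_le[OF b0 \<delta>] mult_left_mono[OF \<delta>_le enorm_nonneg[of "b 0"]] by linarith
  moreover have "Jinf M T A1 lam A2h A3 b c i u nu \<le> Jinf M T A1 lam A2h A3 b c i (v i) nu"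
    by (rule best_response[OF i1 u])
  ultimately have "JN M T A1 lam A2h A3 b c N i u v - JN M T A1 lam A2h A3 b c N i (v i) v
      \<le> kop_bound T A1 * B * (2 * B / real N) + kop_bound T A1 * (2 * B / real N) * (3 * B)
        + coupling_bound * B * (2 * B / real N)
        + coupling_bound * (2 * B) * (sqrt (h (real N) * T) / (2 * lam))
        + enorm (b 0) * (2 * B / real N)"
    unfolding JN_deviation_identity[OF i u] abs_le_iff by linarith
  also have "\<dots> = (8 * kop_bound T A1 * B\<^sup>2 + 2 * coupling_bound * B\<^sup>2 + 2 * enorm (b 0) * B) / real N
      + coupling_bound * B * sqrt (h (real N) * T) / lam"
    using lam_pos rN by (simp add: field_simps power2_eq_square)
  finally show ?thesis by simp
qed

lemma JN_deviation_gain_uniform: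
  assumes U_adm: "\<And>u. u \<in> U \<Longrightarrow> u \<in> adm" and U_le: "\<And>u. u \<in> U \<Longrightarrow> enorm u \<le> B"
    and v_U: "\<And>j. j \<ge> 1 \<Longrightarrow> v j \<in> U" and B: "0 \<le> B"
  shows "\<exists>C>0. \<forall>N. \<forall>i\<in>{1..N}. \<forall>u\<in>U.
    JN M T A1 lam A2h A3 b c N i u v
      \<le> JN M T A1 lam A2h A3 b c N i (v i) v + C * max (sqrt (h (real N))) (1 / real N)"
proof -
  define C1 where "C1 = 8 * kop_bound T A1 * B\<^sup>2 + 2 * coupling_bound * B\<^sup>2 + 2 * enorm (b 0) * B"
  define C2 where "C2 = coupling_bound * B * sqrt T / lam"
  have "0 \<le> kop_bound T A1" "0 \<le> coupling_bound"
    using kernel_row_bound_nonneg A1_bound A3_bound A3_adj_bound T_nonneg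
    by (auto simp: kop_bound_def coupling_bound_def)
  hence C1: "0 \<le> C1" and C2: "0 \<le> C2"
    unfolding C1_def C2_def using B lam_pos enorm_nonneg[of "b 0"] T_nonneg
    by (auto intro!: divide_nonneg_pos mult_nonneg_nonneg)
  show ?thesis
  proof (intro exI[of _ "C1 + C2 + 1"] conjI allI impI ballI)
    fix N :: nat and i u assume i: "i \<in> {1..N}" and u: "u \<in> U"
    let ?r = "max (sqrt (h (real N))) (1 / real N)"
    have r: "0 \<le> ?r" by (simp add: le_max_iff_disj)
    have "coupling_bound * B * sqrt (h (real N) * T) / lam = C2 * sqrt (h (real N))"
      unfolding C2_def by (simp add: real_sqrt_mult)
    hence "JN M T A1 lam A2h A3 b c N i u v \<le> JN M T A1 lam A2h A3 b c N i (v i) v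
        + C1 * (1 / real N) + C2 * sqrt (h (real N))"
      using JN_deviation_gain_le[OF i U_adm[OF u] U_le[OF u] U_le[OF v_U]] by (simp add: C1_def)
    also have "\<dots> \<le> JN M T A1 lam A2h A3 b c N i (v i) v + C1 * ?r + C2 * ?r"
      using C1 C2 by (intro add_mono mult_left_mono) auto
    also have "\<dots> \<le> JN M T A1 lam A2h A3 b c N i (v i) v + (C1 + C2 + 1) * ?r"
      using r by (simp add: algebra_simps)
    finally show "JN M T A1 lam A2h A3 b c N i u v \<le> JN M T A1 lam A2h A3 b c N i (v i) v + (C1 + C2 + 1) * ?r" .
  qed (use C1 C2 in simp)
qed

end

theorem mainTheorem16:
  fixes M :: "'a measure" and T :: real and F :: "real \<Rightarrow> 'a measure"
    and A1 A2h A3 :: "real \<Rightarrow> real \<Rightarrow> real" and lam :: real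
    and b :: "nat \<Rightarrow> real \<Rightarrow> 'a \<Rightarrow> real" and binf :: "real \<Rightarrow> 'a \<Rightarrow> real"
    and c :: "nat \<Rightarrow> 'a \<Rightarrow> real" and h :: "real \<Rightarrow> real"
    and nu :: "real \<Rightarrow> 'a \<Rightarrow> real" and v :: "nat \<Rightarrow> real \<Rightarrow> 'a \<Rightarrow> real"
    and Ub :: "(real \<Rightarrow> 'a \<Rightarrow> real) set"
  assumes "prob_space M" and "T > 0"
    and "usual_filtration M T F"
    and "admissible_kernel T A1" and "admissible_kernel T A3"
    and "lam > 0" and "admissible_kernel T A2h"
    and "\<And>i. b i \<in> admissible_controls M T F"
    and "\<And>i. i \<ge> 1 \<Longrightarrow> integrable M (c i)"
    and "binf \<in> admissible_controls M T F"
    and "\<forall>x\<ge>0. h x \<ge> 0" and "\<exists>K. \<forall>x\<ge>0. h x \<le> K" and "(h \<longlongrightarrow> 0) at_top"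
    and "\<And>N t. N \<ge> 1 \<Longrightarrow> t \<in> {0..T} \<Longrightarrow>
           (\<integral>\<^sup>+ \<omega>. ennreal (((\<Sum>i\<in>{1..N}. b i t \<omega>) / real N - binf t \<omega>)\<^sup>2) \<partial>M) \<le> ennreal (h (real N))"
    and "mfg_nash M T F A1 lam A2h A3 b c nu v"
    and "Ub \<subseteq> admissible_controls M T F"
    and "\<And>i. i \<ge> 1 \<Longrightarrow> v i \<in> Ub"
    and "(SUP u\<in>Ub. sqnorm2T M T u) < \<infinity>"
  shows "\<exists>C>0. \<forall>N\<ge>2. \<forall>i\<in>{1..N}.
           ereal (JN M T A1 lam A2h A3 b c N i (v i) v) \<le> (SUP u\<in>Ub. ereal (JN M T A1 lam A2h A3 b c N i u v)) \<and>
           (SUP u\<in>Ub. ereal (JN M T A1 lam A2h A3 b c N i u v))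
             \<le> ereal (JN M T A1 lam A2h A3 b c N i (v i) v + C * max (sqrt (h (real N))) (1 / real N))"
proof -
  have "finite_horizon M T"
    using assms(1,2) by (simp add: finite_horizon_def finite_horizon_axioms_def)
  interpret mfg_equilibrium M T F A1 A2h A3 lam b c binf nu v h
    by (rule mfg_equilibrium.intro[OF \<open>finite_horizon M T\<close>], unfold_locales)
      (fact assms(3-11,13-15))+
  define B where "B = sqrt (enn2real (SUP u\<in>Ub. sqnorm2T M T u))"
  have Ub_adm: "\<And>u. u \<in> Ub \<Longrightarrow> u \<in> adm" using assms(16) by blast
  have Ub_le: "\<And>u. u \<in> Ub \<Longrightarrow> enorm u \<le> B"
    unfolding B_def using enorm_le_sqrt_SUP_sqnorm2T L2_proc_adm Ub_adm assms(18) by blast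
  have "0 \<le> B" unfolding B_def by simp
  from JN_deviation_gain_uniform[OF Ub_adm Ub_le assms(17) this]
  obtain C where "C > 0" and gain:
    "\<forall>N. \<forall>i\<in>{1..N}. \<forall>u\<in>Ub. JN M T A1 lam A2h A3 b c N i u v
       \<le> JN M T A1 lam A2h A3 b c N i (v i) v + C * max (sqrt (h (real N))) (1 / real N)"
    by blast
  show ?thesis
  proof (intro exI[of _ C] conjI allI impI ballI \<open>C > 0\<close>)
    fix N :: nat and i assume i: "i \<in> {1..N}"
    thus "ereal (JN M T A1 lam A2h A3 b c N i (v i) v) \<le> (SUP u\<in>Ub. ereal (JN M T A1 lam A2h A3 b c N i u v))"
      using assms(17) by (intro SUP_upper) auto
    show "(SUP u\<in>Ub. ereal (JN M T A1 lam A2h A3 b c N i u v))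
        \<le> ereal (JN M T A1 lam A2h A3 b c N i (v i) v + C * max (sqrt (h (real N))) (1 / real N))"
      using gain i by (intro SUP_least) auto
  qed
qed

end
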